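(* Let $u$ be a minimizer of the problem $\min f(x)$ s.t. $G(x)\succeq 0$, and suppose the nondegeneracy condition, the strict complementarity condition and the second order sufficient condition hold at $u$. Then there exists $\Theta \in \mathcal{S}^{m-r}$ such that \[ \nabla L^{re}(u) = 0, \qquad \Theta \succeq 0,\quad T(u)\succeq 0, \qquad \langle \Theta, T(u)\rangle = 0, \] where $L^{re}(x) := f(x) - \langle \Theta, T(x)\rangle$. Furthermore: (i) the linear mapping $\nabla T(u)$ is regular, i.e. $\ker \nabla T(u)^* = \{0\}\subset \mathcal{S}^{m-r}$; (ii) $\Theta \succ 0$; (iii) for all $0 \neq h \in \ker \nabla T(u)$, $h^T \nabla^2 L^{re}(u)\, h > 0$.
   Context: Let $f\in\mathbb{R}[x]$, $x=(x_1,\dots,x_n)$, and let $G(x)$ be an $m\times m$ symmetric polynomial matrix; consider $\min f(x)$ s.t. $G(x)\succeq 0$. $\mathcal{S}^k$ denotes the $k\times k$ real symmetric matrices. For a matrix polynomial $F$, $\nabla F(x)[d]=\sum_i d_i \nabla_{x_i}F(x)$ and its adjoint is $\nabla F(x)^*[X]=(\langle \nabla_{x_1}F(x),X\rangle,\dots,\langle \nabla_{x_n}F(x),X\rangle)^T$. Nondegeneracy condition at feasible $u$: $\operatorname{Im}\nabla G(u) + \{N\in\mathcal{S}^m : E^TNE=0\} = \mathcal{S}^m$, where the columns of $E$ form a basis of $\ker G(u)$. Under it there is a unique $\Lambda\in\mathcal{S}^m$ with $\nabla f(u)-\nabla G(u)^*[\Lambda]=0$, $\Lambda\succeq 0$,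 $G(u)\succeq0$, $\langle\Lambda,G(u)\rangle=0$. Strict complementarity condition: $\operatorname{rank}G(u)+\operatorname{rank}\Lambda=m$. Second order sufficient condition: $h^T(\nabla^2 L(u,\Lambda)+H(u,\Lambda))h>0$ for all nonzero $h\in\{h\in\mathbb{R}^n:\sum_i h_i E^T\nabla_{x_i}G(u)E=0\}$, where $L(x,\Lambda)=f(x)-\langle\Lambda,G(x)\rangle$ and $H(x,Q)_{ij}=2\langle Q,\nabla_{x_i}G(x)\,G(x)^{\dagger}\,\nabla_{x_j}G(x)\rangle$ ($\dagger$ = Moore–Penrose inverse). Let $r=\operatorname{rank}G(u)$. Up to a permutation of rows and columns write $G=\begin{bmatrix}A & B\\ B^T & C\end{bmatrix}$ with $A\in\mathcal{S}^r\mathbb{R}[x]$ and $\operatorname{rank}A(u)=r$. Set $p(x)=\det A(x)$, $S(x)=C(x)-B(x)^TA(x)^{-1}B(x)$ (Schur complement, defined near $u$), and $T(x)=p(x)^2S(x)$, which is an $(m-r)\times(m-r)$ symmetric polynomial matrix (since $pA^{-1}$ is the adjugate of $A$), with $T(u)=0$; near $u$, $G(x)\succeq0$ iff $T(x)\succeq0$. *)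

theory Defs
  imports "HOL-Analysis.Analysis"
begin

inductive_set poly_fun :: "(real^'n \<Rightarrow> real) set" where
  pf_const: "(\<lambda>x. c) \<in> poly_fun"
| pf_var: "(\<lambda>x. x $ i) \<in> poly_fun"
| pf_add: "p \<in> poly_fun \<Longrightarrow> q \<in> poly_fun \<Longrightarrow> (\<lambda>x. p x + q x) \<in> poly_fun"
| pf_mult: "p \<in> poly_fun \<Longrightarrow> q \<in> poly_fun \<Longrightarrow> (\<lambda>x. p x * q x) \<in> poly_fun"

definition sym_poly_matrix :: "(real^'n \<Rightarrow> real^'m^'m) \<Rightarrow> bool" where
  "sym_poly_matrix G \<longleftrightarrow> (\<forall>i j. (\<lambda>x. G x $ i $ j) \<in> poly_fun) \<and> (\<forall>x. transpose (G x) = G x)"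

definition psd :: "real^'m^'m \<Rightarrow> bool" where
  "psd X \<longleftrightarrow> transpose X = X \<and> (\<forall>v. 0 \<le> v \<bullet> (X *v v))"

definition frob :: "real^'m^'k \<Rightarrow> real^'m^'k \<Rightarrow> real" where
  "frob X Y = (\<Sum>i\<in>UNIV. \<Sum>j\<in>UNIV. X $ i $ j * Y $ i $ j)"

definition mp_inverse :: "real^'m^'m \<Rightarrow> real^'m^'m" where
  "mp_inverse A = (THE X. A ** X ** A = A \<and> X ** A ** X = X \<and>
      transpose (A ** X) = A ** X \<and> transpose (X ** A) = X ** A)"

definition partial :: "(real^'n \<Rightarrow> 'b::real_normed_vector) \<Rightarrow> 'n \<Rightarrow> real^'n \<Rightarrow> 'b" where
  "partial F i x = frechet_derivative F (at x) (axis i 1)"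

definition grad :: "(real^'n \<Rightarrow> real) \<Rightarrow> real^'n \<Rightarrow> real^'n" where
  "grad F x = (\<chi> i. partial F i x)"

definition hess :: "(real^'n \<Rightarrow> real) \<Rightarrow> real^'n \<Rightarrow> real^'n^'n" where
  "hess F x = (\<chi> i j. partial (\<lambda>y. partial F i y) j x)"

definition dirder :: "(real^'n \<Rightarrow> real^'m^'k) \<Rightarrow> real^'n \<Rightarrow> real^'n \<Rightarrow> real^'m^'k" where
  "dirder F x d = (\<Sum>i\<in>UNIV. d $ i *\<^sub>R partial F i x)"

definition dirder_adj :: "(real^'n \<Rightarrow> real^'m^'k) \<Rightarrow> real^'n \<Rightarrow> real^'m^'k \<Rightarrow> real^'n" where
  "dirder_adj F x X = (\<chi> i. frob (partial F i x) X)"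

definition minimizer :: "(real^'n \<Rightarrow> real) \<Rightarrow> (real^'n \<Rightarrow> real^'m^'m) \<Rightarrow> real^'n \<Rightarrow> bool" where
  "minimizer f G u \<longleftrightarrow> psd (G u) \<and> (\<forall>x. psd (G x) \<longrightarrow> f u \<le> f x)"

text \<open>{N in S^m : E^T N E = 0}, where the columns of E form a basis of ker G(u);
  E^T N E = 0 iff v^T N w = 0 for all v, w in ker G(u).\<close>
definition kerzero_set :: "real^'m^'m \<Rightarrow> (real^'m^'m) set" where
  "kerzero_set Gu = {N. transpose N = N \<and>
      (\<forall>v w. Gu *v v = 0 \<longrightarrow> Gu *v w = 0 \<longrightarrow> v \<bullet> (N *v w) = 0)}"

definition nondegenerate :: "(real^'n \<Rightarrow> real^'m^'m) \<Rightarrow> real^'n \<Rightarrow> bool" where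
  "nondegenerate G u \<longleftrightarrow>
     (\<forall>N. transpose N = N \<longrightarrow>
        (\<exists>d M. M \<in> kerzero_set (G u) \<and> N = dirder G u d + M))"

definition KKT_multiplier :: "(real^'n \<Rightarrow> real) \<Rightarrow> (real^'n \<Rightarrow> real^'m^'m) \<Rightarrow> real^'n \<Rightarrow> real^'m^'m \<Rightarrow> bool" where
  "KKT_multiplier f G u \<Lambda> \<longleftrightarrow> transpose \<Lambda> = \<Lambda> \<and>
     grad f u - dirder_adj G u \<Lambda> = 0 \<and> psd \<Lambda> \<and> psd (G u) \<and> frob \<Lambda> (G u) = 0"

definition strict_compl :: "(real^'n \<Rightarrow> real^'m^'m) \<Rightarrow> real^'n \<Rightarrow> real^'m^'m \<Rightarrow> bool" where
  "strict_compl G u \<Lambda> \<longleftrightarrow> rank (G u) + rank \<Lambda> = CARD('m)"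

definition Lagr :: "(real^'n \<Rightarrow> real) \<Rightarrow> (real^'n \<Rightarrow> real^'m^'m) \<Rightarrow> real^'m^'m \<Rightarrow> real^'n \<Rightarrow> real" where
  "Lagr f G \<Lambda> x = f x - frob \<Lambda> (G x)"

definition Hterm :: "(real^'n \<Rightarrow> real^'m^'m) \<Rightarrow> real^'n \<Rightarrow> real^'m^'m \<Rightarrow> real^'n^'n" where
  "Hterm G x Q = (\<chi> i j. 2 * frob Q (partial G i x ** mp_inverse (G x) ** partial G j x))"

text \<open>Critical cone {h : sum_i h_i E^T nabla_{x_i}G(u) E = 0}, E a basis of ker G(u).\<close>
definition crit_cone :: "(real^'n \<Rightarrow> real^'m^'m) \<Rightarrow> real^'n \<Rightarrow> (real^'n) set" where
  "crit_cone G u = {h. \<forall>v w. G u *v v = 0 \<longrightarrow> G u *v w = 0 \<longrightarrow>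
                          v \<bullet> (dirder G u h *v w) = 0}"

definition SOSC :: "(real^'n \<Rightarrow> real) \<Rightarrow> (real^'n \<Rightarrow> real^'m^'m) \<Rightarrow> real^'n \<Rightarrow> real^'m^'m \<Rightarrow> bool" where
  "SOSC f G u \<Lambda> \<longleftrightarrow> (\<forall>h \<in> crit_cone G u. h \<noteq> 0 \<longrightarrow>
      0 < h \<bullet> ((hess (Lagr f G \<Lambda>) u + Hterm G u \<Lambda>) *v h))"

text \<open>The partition G = [A B; B^T C] after a simultaneous permutation of rows and columns
  is encoded by an index set I (the rows/columns of A); the rows/columns of C are -I.
  Matrices of size |I| x |I| and |-I| x |-I| are encoded as m x m matrices vanishing outside
  the corresponding block.  A is padded with the identity outside I x I, so that
  det (padA) = det A and the I-block of the inverse of padA is A^{-1}.\<close>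

definition padA :: "'m set \<Rightarrow> real^'m^'m \<Rightarrow> real^'m^'m" where
  "padA I X = (\<chi> a b. if a \<in> I \<and> b \<in> I then X $ a $ b else if a = b then 1 else 0)"

definition pdet :: "(real^'n \<Rightarrow> real^'m^'m) \<Rightarrow> 'm set \<Rightarrow> real^'n \<Rightarrow> real" where
  "pdet G I x = det (padA I (G x))"

text \<open>Schur complement S = C - B^T A^{-1} B (block -I x -I).\<close>
definition schur :: "(real^'n \<Rightarrow> real^'m^'m) \<Rightarrow> 'm set \<Rightarrow> real^'n \<Rightarrow> real^'m^'m" where
  "schur G I x = (\<chi> j k. if j \<notin> I \<and> k \<notin> I then
       G x $ j $ k - (\<Sum>a\<in>I. \<Sum>b\<in>I. G x $ a $ j * matrix_inv (padA I (G x)) $ a $ b * G x $ b $ k)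
     else 0)"

definition Tmat :: "(real^'n \<Rightarrow> real^'m^'m) \<Rightarrow> 'm set \<Rightarrow> real^'n \<Rightarrow> real^'m^'m" where
  "Tmat G I x = (pdet G I x)\<^sup>2 *\<^sub>R schur G I x"

definition sym_on :: "'m set \<Rightarrow> (real^'m^'m) set" where
  "sym_on J = {X. transpose X = X \<and> (\<forall>i j. (i \<notin> J \<or> j \<notin> J) \<longrightarrow> X $ i $ j = 0)}"

definition psd_on :: "'m set \<Rightarrow> real^'m^'m \<Rightarrow> bool" where
  "psd_on J X \<longleftrightarrow> (\<forall>v. (\<forall>i. i \<notin> J \<longrightarrow> v $ i = 0) \<longrightarrow> 0 \<le> v \<bullet> (X *v v))"

definition pd_on :: "'m set \<Rightarrow> real^'m^'m \<Rightarrow> bool" where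
  "pd_on J X \<longleftrightarrow> (\<forall>v. (\<forall>i. i \<notin> J \<longrightarrow> v $ i = 0) \<longrightarrow> v \<noteq> 0 \<longrightarrow> 0 < v \<bullet> (X *v v))"

end

theory Submission
  imports Defs
begin

text \<open>Near \<open>u\<close> the pivot block \<open>A\<close> stays invertible; put \<open>E = [-A\<^sup>-\<^sup>1B; 1]\<close>. Then
  \<open>E\<^sup>T G E\<close> is the Schur complement \<open>S\<close> and the \<open>A\<close>-rows of \<open>G E\<close> vanish identically, so
  \<open>T = p\<^sup>2 E\<^sup>T G E\<close>. As \<open>rank G(u) = rank A(u)\<close>, \<open>S(u) = 0\<close>; hence \<open>G(u) E(u) = 0\<close> and
  \<open>\<nabla>T(u)[h] = p(u)\<^sup>2 E(u)\<^sup>T \<nabla>G(u)[h] E(u)\<close>. Complementarity \<open>\<Lambda> G(u) = 0\<close> forces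
  \<open>\<Lambda> = E \<Phi> E\<^sup>T\<close> with \<open>\<Phi>\<close> supported on the \<open>C\<close>-block, and \<open>\<Theta> = \<Phi> / p(u)\<^sup>2\<close> satisfies
  \<open>\<langle>\<Theta>, \<nabla>T(u)[h]\<rangle> = \<langle>\<Lambda>, \<nabla>G(u)[h]\<rangle>\<close>, which carries the KKT conditions over.
  Strict complementarity makes \<open>\<Phi>\<close> definite on its block and nondegeneracy makes \<open>\<nabla>T(u)\<close>
  regular. Finally, differentiating \<open>(A-rows of G E) = 0\<close> along a direction \<open>h\<close> with
  \<open>\<nabla>T(u)[h] = 0\<close> gives \<open>\<nabla>G(u)[h] E = - G(u) E'[h]\<close>; with this identity the curvature of \<open>T\<close>
  reproduces the term \<open>H(u, \<Lambda>)\<close>, so the reduced Hessian form equals the one in the second order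
  sufficient condition, and such \<open>h\<close> lie in the critical cone.\<close>

section \<open>Polynomial functions\<close>

lemma poly_fun_cmult: "p \<in> poly_fun \<Longrightarrow> (\<lambda>x. c * p x) \<in> poly_fun"
  using poly_fun.pf_mult[OF poly_fun.pf_const] by blast

lemma poly_fun_if:
  "(c \<Longrightarrow> (\<lambda>x. f x) \<in> poly_fun) \<Longrightarrow> (\<not> c \<Longrightarrow> (\<lambda>x. g x) \<in> poly_fun) \<Longrightarrow>
    (\<lambda>x. if c then f x else g x) \<in> poly_fun"
  by (cases c) auto

lemma poly_fun_sum:
  "finite A \<Longrightarrow> (\<And>a. a \<in> A \<Longrightarrow> (\<lambda>x. f a x) \<in> poly_fun) \<Longrightarrow> (\<lambda>x. \<Sum>a\<in>A. f a x) \<in> poly_fun"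
  by (induction A rule: finite_induct) (auto intro: poly_fun.intros)

lemma poly_fun_prod:
  "finite A \<Longrightarrow> (\<And>a. a \<in> A \<Longrightarrow> (\<lambda>x. f a x) \<in> poly_fun) \<Longrightarrow> (\<lambda>x. \<Prod>a\<in>A. f a x) \<in> poly_fun"
  by (induction A rule: finite_induct) (auto intro: poly_fun.intros)

lemma poly_fun_det:
  fixes M :: "real^'n \<Rightarrow> real^'m^'m"
  assumes "\<And>a b. (\<lambda>x. M x $ a $ b) \<in> poly_fun"
  shows "(\<lambda>x. det (M x)) \<in> poly_fun"
  unfolding det_def by (intro poly_fun_sum poly_fun_cmult poly_fun_prod assms) auto

lemma has_derivative_partial_eq:
  "(F has_derivative F') (at x) \<Longrightarrow> partial F i x = F' (axis i 1)"
  unfolding partial_def by (simp add: frechet_derivative_at[symmetric])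

lemma inner_axis_sum: "(\<Sum>k\<in>UNIV. axis i (1::real) $ k * c k) = c i"
proof -
  have "axis i (1::real) $ k * c k = (if k = i then c k else 0)" for k
    by (simp add: axis_def)
  then show ?thesis
    by simp
qed

lemma poly_fun_has_poly_derivative:
  assumes "p \<in> poly_fun"
  shows "\<exists>D. (\<forall>i. D i \<in> poly_fun) \<and>
           (\<forall>x. (p has_derivative (\<lambda>h. \<Sum>i\<in>UNIV. h $ i * D i x)) (at x))"
  using assms
proof induction
  case (pf_const c)
  show ?case
    by (rule exI[of _ "\<lambda>i x. 0"]) (auto intro: poly_fun.pf_const)
next
  case (pf_var k)
  have "(\<lambda>h::real^'a. \<Sum>i\<in>UNIV. h $ i * (if i = k then 1 else 0)) = (\<lambda>h. h $ k)"
    by (simp add: if_distrib cong: if_cong)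
  then have "((\<lambda>x::real^'a. x $ k) has_derivative
      (\<lambda>h. \<Sum>i\<in>UNIV. h $ i * (if i = k then 1 else 0))) (at x)" for x
    by (simp add: bounded_linear_imp_has_derivative bounded_linear_vec_nth)
  then show ?case
    by (intro exI[of _ "\<lambda>i x. if i = k then 1 else 0"]) (auto intro: poly_fun.pf_const)
next
  case (pf_add p q)
  then obtain Dp Dq where
    Dp: "\<forall>i. Dp i \<in> poly_fun" "\<forall>x. (p has_derivative (\<lambda>h. \<Sum>i\<in>UNIV. h $ i * Dp i x)) (at x)" and
    Dq: "\<forall>i. Dq i \<in> poly_fun" "\<forall>x. (q has_derivative (\<lambda>h. \<Sum>i\<in>UNIV. h $ i * Dq i x)) (at x)"
    by blast
  show ?case
  proof (intro exI[of _ "\<lambda>i x. Dp i x + Dq i x"] conjI allI)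
    show "(\<lambda>x. Dp i x + Dq i x) \<in> poly_fun" for i
      using Dp Dq by (auto intro: poly_fun.pf_add)
    show "((\<lambda>x. p x + q x) has_derivative (\<lambda>h. \<Sum>i\<in>UNIV. h $ i * (Dp i x + Dq i x))) (at x)" for x
      using has_derivative_add[OF Dp(2)[rule_format] Dq(2)[rule_format]]
      by (simp add: distrib_left sum.distrib)
  qed
next
  case (pf_mult p q)
  then obtain Dp Dq where
    Dp: "\<forall>i. Dp i \<in> poly_fun" "\<forall>x. (p has_derivative (\<lambda>h. \<Sum>i\<in>UNIV. h $ i * Dp i x)) (at x)" and
    Dq: "\<forall>i. Dq i \<in> poly_fun" "\<forall>x. (q has_derivative (\<lambda>h. \<Sum>i\<in>UNIV. h $ i * Dq i x)) (at x)"
    by blast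
  show ?case
  proof (intro exI[of _ "\<lambda>i x. p x * Dq i x + Dp i x * q x"] conjI allI)
    show "(\<lambda>x. p x * Dq i x + Dp i x * q x) \<in> poly_fun" for i
      using Dp Dq pf_mult by (auto intro!: poly_fun.pf_add poly_fun.pf_mult)
    show "((\<lambda>x. p x * q x) has_derivative
        (\<lambda>h. \<Sum>i\<in>UNIV. h $ i * (p x * Dq i x + Dp i x * q x))) (at x)" for x
      using has_derivative_mult[OF Dp(2)[rule_format] Dq(2)[rule_format]]
      by (simp add: distrib_left sum.distrib sum_distrib_left sum_distrib_right mult_ac)
  qed
qed

lemma poly_fun_partial_and_derivative:
  assumes "p \<in> poly_fun"
  shows "(\<forall>i. (\<lambda>x. partial p i x) \<in> poly_fun) \<and> (\<forall>x. (p has_derivative (\<lambda>h. grad p x \<bullet> h)) (at x))"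
proof -
  obtain D where D: "\<forall>i. D i \<in> poly_fun"
    "\<forall>x. (p has_derivative (\<lambda>h. \<Sum>i\<in>UNIV. h $ i * D i x)) (at x)"
    using poly_fun_has_poly_derivative[OF assms] by blast
  have partial: "partial p i x = D i x" for i x
    using has_derivative_partial_eq[OF D(2)[rule_format, of x], of i] by (simp add: inner_axis_sum)
  have "(\<lambda>h. \<Sum>i\<in>UNIV. h $ i * D i x) = (\<lambda>h. grad p x \<bullet> h)" for x
    by (simp add: grad_def inner_vec_def partial mult.commute)
  then show ?thesis
    using D partial by (auto simp: fun_eq_iff[of "\<lambda>x. partial p _ x"])
qed

lemma poly_fun_has_derivative:
  "p \<in> poly_fun \<Longrightarrow> (p has_derivative (\<lambda>h. grad p x \<bullet> h)) (at x)"
  using poly_fun_partial_and_derivative by blast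

lemma poly_fun_partial: "p \<in> poly_fun \<Longrightarrow> (\<lambda>x. partial p i x) \<in> poly_fun"
  using poly_fun_partial_and_derivative by blast

lemma poly_fun_grad_inner: "p \<in> poly_fun \<Longrightarrow> (\<lambda>x. grad p x \<bullet> v) \<in> poly_fun"
  unfolding grad_def inner_vec_def
  by (intro poly_fun_sum) (simp_all add: mult.commute poly_fun_cmult poly_fun_partial)

lemma poly_fun_continuous: "p \<in> poly_fun \<Longrightarrow> continuous_on UNIV p"
  by (meson differentiable_def differentiable_at_withinI differentiable_imp_continuous_on
      differentiable_on_def poly_fun_has_derivative)

section \<open>Derivatives of matrix-valued functions\<close>

lemma has_derivative_vec_lambdaI:
  fixes f :: "'a::real_normed_vector \<Rightarrow> 'b::euclidean_space^'i"
  assumes "\<And>i. ((\<lambda>x. f x $ i) has_derivative (\<lambda>h. f' h $ i)) (at x within S)"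
  shows "(f has_derivative f') (at x within S)"
proof -
  have "((\<lambda>x. f x \<bullet> j) has_derivative (\<lambda>x. f' x \<bullet> j)) (at x within S)" if "j \<in> Basis" for j
  proof -
    obtain i b where j: "j = axis i b" and b: "b \<in> Basis"
      using \<open>j \<in> Basis\<close> unfolding Basis_vec_def by auto
    have "\<forall>b\<in>Basis. ((\<lambda>x. f x $ i \<bullet> b) has_derivative (\<lambda>h. f' h $ i \<bullet> b)) (at x within S)"
      using assms[of i] has_derivative_componentwise_within[of "\<lambda>x. f x $ i" "\<lambda>h. f' h $ i"]
      by blast
    then show ?thesis
      using b by (simp add: j inner_axis)
  qed
  then show ?thesis
    using has_derivative_componentwise_within by blast
qed

lemma has_derivative_matrixI:
  fixes M :: "'a::real_normed_vector \<Rightarrow> real^'m^'k"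
  assumes "\<And>a b. ((\<lambda>y. M y $ a $ b) has_derivative D a b) (at x)"
  shows "(M has_derivative (\<lambda>h. \<chi> a b. D a b h)) (at x)"
  by (intro has_derivative_vec_lambdaI) (simp add: assms)

lemma has_derivative_matrix_entry:
  fixes M :: "'a::real_normed_vector \<Rightarrow> real^'m^'k"
  assumes "(M has_derivative M') F"
  shows "((\<lambda>y. M y $ a $ b) has_derivative (\<lambda>h. M' h $ a $ b)) F"
proof -
  have "linear (\<lambda>A::real^'m^'k. A $ a $ b)"
    by (auto intro!: linearI)
  then have "bounded_linear (\<lambda>A::real^'m^'k. A $ a $ b)"
    by (simp add: linear_conv_bounded_linear)
  from bounded_linear.has_derivative[OF this assms] show ?thesis .
qed

lemma partial_matrix_entry:
  fixes M :: "real^'n \<Rightarrow> real^'m^'k"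
  assumes "M differentiable (at x)"
  shows "partial M i x $ a $ b = partial (\<lambda>y. M y $ a $ b) i x"
proof -
  obtain M' where M': "(M has_derivative M') (at x)"
    using assms differentiable_def by blast
  show ?thesis
    using has_derivative_partial_eq[OF M'] has_derivative_partial_eq[OF has_derivative_matrix_entry[OF M']]
    by simp
qed

lemma bounded_bilinear_matrix_mult:
  "bounded_bilinear (\<lambda>(A::real^'n^'m) (B::real^'p^'n). A ** B)"
proof -
  have "bilinear (\<lambda>(A::real^'n^'m) (B::real^'p^'n). A ** B)"
    unfolding bilinear_def
    by (auto intro!: linearI simp: matrix_add_ldistrib matrix_scalar_ac scalar_matrix_assoc
        matrix_matrix_mult_def vec_eq_iff sum.distrib distrib_right distrib_left sum_distrib_left mult_ac)
  then show ?thesis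
    by (simp add: bilinear_conv_bounded_bilinear)
qed

lemma has_derivative_matrix_mult:
  fixes A :: "'a::real_normed_vector \<Rightarrow> real^'n^'m" and B :: "'a \<Rightarrow> real^'p^'n"
  assumes "(A has_derivative A') (at x)" "(B has_derivative B') (at x)"
  shows "((\<lambda>y. A y ** B y) has_derivative (\<lambda>h. A x ** B' h + A' h ** B x)) (at x)"
  using bounded_bilinear.FDERIV[OF bounded_bilinear_matrix_mult assms] by simp

lemma has_derivative_matrix_mult_left:
  fixes A :: "'a::real_normed_vector \<Rightarrow> real^'n^'m"
  assumes "(A has_derivative A') (at x)"
  shows "((\<lambda>y. C ** A y) has_derivative (\<lambda>h. C ** A' h)) (at x)"
  using has_derivative_matrix_mult[OF has_derivative_const[of C] assms] by simp

lemma has_derivative_matrix_mult_right: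
  fixes A :: "'a::real_normed_vector \<Rightarrow> real^'n^'m"
  assumes "(A has_derivative A') (at x)"
  shows "((\<lambda>y. A y ** C) has_derivative (\<lambda>h. A' h ** C)) (at x)"
  using has_derivative_matrix_mult[OF assms has_derivative_const[of C]] by simp

lemma has_derivative_transpose:
  fixes A :: "'a::real_normed_vector \<Rightarrow> real^'n^'m"
  assumes "(A has_derivative A') F"
  shows "((\<lambda>y. transpose (A y)) has_derivative (\<lambda>h. transpose (A' h))) F"
proof -
  have "linear (transpose :: real^'n^'m \<Rightarrow> real^'m^'n)"
    by (auto intro!: linearI simp: transpose_def vec_eq_iff)
  then show ?thesis
    using bounded_linear.has_derivative[OF _ assms] by (simp add: linear_conv_bounded_linear)
qed

lemma linear_axis_expand:
  fixes L :: "real^'n \<Rightarrow> 'b::real_vector"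
  assumes "linear L"
  shows "L h = (\<Sum>i\<in>UNIV. h $ i *\<^sub>R L (axis i 1))"
proof -
  have "h = (\<Sum>i\<in>UNIV. h $ i *\<^sub>R axis i 1)"
    using basis_expansion[of h] by (simp add: scalar_mult_eq_scaleR)
  then have "L h = L (\<Sum>i\<in>UNIV. h $ i *\<^sub>R axis i 1)"
    by simp
  also have "\<dots> = (\<Sum>i\<in>UNIV. h $ i *\<^sub>R L (axis i 1))"
    using assms by (simp add: linear_sum linear_scale)
  finally show ?thesis .
qed

lemma has_derivative_dirder_eq:
  "(F has_derivative F') (at x) \<Longrightarrow> dirder F x h = F' h"
  using linear_axis_expand[of F' h] has_derivative_partial_eq[of F F' x]
  by (simp add: dirder_def has_derivative_linear)

lemma has_derivative_grad_eq:
  "(F has_derivative F') (at x) \<Longrightarrow> grad F x = (\<chi> i. F' (axis i 1))"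
  by (simp add: grad_def has_derivative_partial_eq)

lemma hess_quadratic_form:
  fixes F :: "real^'n \<Rightarrow> real"
  assumes U: "open U" "u \<in> U"
    and F1: "\<And>y. y \<in> U \<Longrightarrow> (F has_derivative F' y) (at y)"
    and F2: "\<And>v. ((\<lambda>y. F' y v) has_derivative \<Psi> v) (at u)"
  shows "h \<bullet> (hess F u *v h) = \<Psi> h h"
proof -
  have hess_entry: "hess F u $ i $ l = \<Psi> (axis i 1) (axis l 1)" for i l
  proof -
    have "partial F i y = F' y (axis i 1)" if "y \<in> U" for y
      using has_derivative_partial_eq[OF F1[OF that]] .
    then have "((\<lambda>y. partial F i y) has_derivative \<Psi> (axis i 1)) (at u)"
      using has_derivative_transform_within_open[OF F2[of "axis i 1"] U] by simp
    then show ?thesis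
      by (simp add: hess_def has_derivative_partial_eq)
  qed
  have expand: "(\<Sum>i\<in>UNIV. h $ i *\<^sub>R F' y (axis i 1)) = F' y h" if "y \<in> U" for y
    using linear_axis_expand[OF has_derivative_linear[OF F1[OF that]], of h] by simp
  have "((\<lambda>y. \<Sum>i\<in>UNIV. h $ i *\<^sub>R F' y (axis i 1)) has_derivative
      (\<lambda>w. \<Sum>i\<in>UNIV. h $ i *\<^sub>R \<Psi> (axis i 1) w)) (at u)"
    by (intro has_derivative_sum has_derivative_scaleR_right F2)
  then have "((\<lambda>y. F' y h) has_derivative (\<lambda>w. \<Sum>i\<in>UNIV. h $ i *\<^sub>R \<Psi> (axis i 1) w)) (at u)"
    by (rule has_derivative_transform_within_open[OF _ U]) (rule expand)
  then have \<Psi>_h: "\<Psi> h = (\<lambda>w. \<Sum>i\<in>UNIV. h $ i *\<^sub>R \<Psi> (axis i 1) w)"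
    using has_derivative_unique F2[of h] by blast
  have \<Psi>_axis: "\<Psi> (axis i 1) h = (\<Sum>l\<in>UNIV. h $ l * \<Psi> (axis i 1) (axis l 1))" for i
    using linear_axis_expand[of "\<Psi> (axis i 1)" h] has_derivative_linear[OF F2] by simp
  have "h \<bullet> (hess F u *v h) = (\<Sum>i\<in>UNIV. h $ i * (\<Sum>l\<in>UNIV. \<Psi> (axis i 1) (axis l 1) * h $ l))"
    by (simp add: inner_vec_def matrix_vector_mult_def hess_entry)
  also have "\<dots> = \<Psi> h h"
    by (simp add: \<Psi>_h \<Psi>_axis mult.commute)
  finally show ?thesis .
qed

definition poly_matrix :: "(real^'n \<Rightarrow> real^'m^'k) \<Rightarrow> bool" where
  "poly_matrix M \<longleftrightarrow> (\<forall>a b. (\<lambda>x. M x $ a $ b) \<in> poly_fun)"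

lemma poly_matrix_has_derivative:
  assumes "poly_matrix M"
  shows "(M has_derivative dirder M x) (at x)"
proof -
  have "((\<lambda>y. M y $ a $ b) has_derivative (\<lambda>h. grad (\<lambda>y. M y $ a $ b) x \<bullet> h)) (at x)" for a b
    using assms poly_fun_has_derivative poly_matrix_def by blast
  then have D: "(M has_derivative (\<lambda>h. \<chi> a b. grad (\<lambda>y. M y $ a $ b) x \<bullet> h)) (at x)"
    by (rule has_derivative_matrixI)
  moreover have "dirder M x = (\<lambda>h. \<chi> a b. grad (\<lambda>y. M y $ a $ b) x \<bullet> h)"
    using has_derivative_dirder_eq[OF D] by (rule ext)
  ultimately show ?thesis
    by simp
qed

lemma poly_matrix_partial_entry:
  "poly_matrix M \<Longrightarrow> partial M i x $ a $ b = partial (\<lambda>y. M y $ a $ b) i x"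
  using partial_matrix_entry poly_matrix_has_derivative differentiable_def by blast

lemma poly_matrix_dirder:
  assumes "poly_matrix M"
  shows "poly_matrix (\<lambda>x. dirder M x v)"
proof -
  have "dirder M x v $ a $ b = grad (\<lambda>y. M y $ a $ b) x \<bullet> v" for x a b
    by (simp add: dirder_def grad_def inner_vec_def sum_component mult.commute
        poly_matrix_partial_entry[OF assms])
  then show ?thesis
    using assms by (simp add: poly_matrix_def poly_fun_grad_inner)
qed

lemma frob_inner: "frob X Y = X \<bullet> Y"
  by (simp add: frob_def inner_vec_def)

lemma matrix_diff_ldistrib: "(A::real^'n^'m) ** (B - C) = A ** B - A ** C"
  by (simp add: matrix_matrix_mult_def vec_eq_iff sum_subtractf right_diff_distrib)

lemma matrix_diff_rdistrib: "((B::real^'n^'m) - C) ** A = B ** A - C ** A"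
  by (simp add: matrix_matrix_mult_def vec_eq_iff sum_subtractf left_diff_distrib)

lemma matrix_add_rdistrib: "((B::real^'n^'m) + C) ** A = B ** A + C ** A"
  by (simp add: matrix_matrix_mult_def vec_eq_iff sum.distrib distrib_right)

lemma matrix_neg_ldistrib: "(A::real^'n^'m) ** (- B) = - (A ** B)"
  using matrix_diff_ldistrib[of A 0 B] by simp

lemma matrix_neg_rdistrib: "(- B) ** (A::real^'n^'m) = - ((B::real^'m^'k) ** A)"
  using matrix_diff_rdistrib[of 0 B A] by simp

lemma matrix_mult_sum_left: "(\<Sum>b\<in>B. f b) ** (A::real^'n^'m) = (\<Sum>b\<in>B. (f b::real^'m^'k) ** A)"
  using sum.swap
  by (simp add: matrix_matrix_mult_def vec_eq_iff sum_distrib_right sum_component) fastforce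

lemma matrix_mult_sum_right: "(A::real^'n^'m) ** (\<Sum>b\<in>B. f b) = (\<Sum>b\<in>B. A ** f b)"
  using sum.swap
  by (simp add: matrix_matrix_mult_def vec_eq_iff sum_distrib_left sum_component) fastforce

lemma matrix_vector_mult_sum: "(\<Sum>b\<in>B. f b) *v (v::real^'m) = (\<Sum>b\<in>B. (f b :: real^'m^'k) *v v)"
  using sum.swap
  by (simp add: matrix_vector_mult_def vec_eq_iff sum_distrib_right sum_component) fastforce

lemma transpose_zero [simp]: "transpose (0::real^'n^'m) = 0"
  by (simp add: transpose_def vec_eq_iff)

lemma transpose_add: "transpose ((A::real^'n^'m) + B) = transpose A + transpose B"
  by (simp add: transpose_def vec_eq_iff)

lemma transpose_diff: "transpose ((A::real^'n^'m) - B) = transpose A - transpose B"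
  by (simp add: transpose_def vec_eq_iff)

lemma transpose_neg: "transpose (- (A::real^'n^'m)) = - transpose A"
  by (simp add: transpose_def vec_eq_iff)

lemma transpose_sum: "transpose (\<Sum>b\<in>B. (f b :: real^'m^'k)) = (\<Sum>b\<in>B. transpose (f b))"
  by (simp add: transpose_def vec_eq_iff sum_component)

lemma matrix_inv_right: "invertible (A::real^'n^'n) \<Longrightarrow> A ** matrix_inv A = mat 1"
  and matrix_inv_left: "invertible (A::real^'n^'n) \<Longrightarrow> matrix_inv A ** A = mat 1"
proof -
  assume "invertible A"
  then have "\<exists>A'. A ** A' = mat 1 \<and> A' ** A = mat 1"
    by (simp add: invertible_def)
  then have "A ** matrix_inv A = mat 1 \<and> matrix_inv A ** A = mat 1"
    unfolding matrix_inv_def by (rule someI_ex)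
  then show "A ** matrix_inv A = mat 1" "matrix_inv A ** A = mat 1"
    by auto
qed

lemma matrix_vector_mult_axis_nth: "((M::real^'m^'k) *v axis k 1) $ a = M $ a $ k"
  by (simp add: matrix_vector_mult_def axis_def if_distrib cong: if_cong)

lemma matrix_inv_cramer:
  fixes A :: "real^'m^'m"
  assumes "det A \<noteq> 0"
  shows "matrix_inv A $ k $ b = det (\<chi> i j. if j = k then axis b 1 $ i else A $ i $ j) / det A"
proof -
  have "A *v (matrix_inv A *v axis b 1) = axis b 1"
    using assms by (simp add: matrix_vector_mul_assoc matrix_inv_right invertible_det_nz)
  then have "matrix_inv A *v axis b 1 = (\<chi> k. det (\<chi> i j. if j = k then axis b 1 $ i else A $ i $ j) / det A)"
    using cramer[OF assms] by blast
  then show ?thesis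
    using matrix_vector_mult_axis_nth[of "matrix_inv A" b k] by simp
qed

lemma matrix_eq_0_if_columns: "(\<And>k. (S::real^'m^'k) *v axis k 1 = 0) \<Longrightarrow> S = 0"
  by (simp add: vec_eq_iff) (metis matrix_vector_mult_axis_nth zero_index)

lemma inner_matrix_vector_mult: "v \<bullet> ((A::real^'n^'k) *v w) = (transpose A *v v) \<bullet> w"
  by (simp add: dot_lmul_matrix[symmetric])

lemma symmetric_inner_commute:
  "transpose M = M \<Longrightarrow> v \<bullet> ((M::real^'m^'m) *v w) = w \<bullet> (M *v v)"
proof -
  assume "transpose M = M"
  then have "v \<bullet> (M *v w) = (M *v v) \<bullet> w"
    by (metis inner_matrix_vector_mult)
  then show ?thesis
    by (simp add: inner_commute)
qed

lemma congruence_entry: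
  "(transpose A ** M ** A) $ j $ k = (A *v axis j 1) \<bullet> (M *v (A *v axis k 1))"
  for A M :: "real^'m^'m"
proof -
  have "(transpose A ** M ** A) $ j $ k = axis j 1 \<bullet> (transpose A *v (M *v (A *v axis k 1)))"
    using matrix_vector_mult_axis_nth[of "transpose A ** M ** A" k j]
    by (simp add: matrix_vector_mul_assoc matrix_mul_assoc inner_axis')
  also have "\<dots> = (axis j 1 v* transpose A) \<bullet> (M *v (A *v axis k 1))"
    by (rule dot_lmul_matrix[symmetric])
  finally show ?thesis
    by (simp only: vector_transpose_matrix)
qed

lemma inner_matrix_mult_left: "((A::real^'n^'m) ** (B::real^'p^'n)) \<bullet> C = B \<bullet> (transpose A ** C)"
proof -
  have "(A ** B) \<bullet> C = (\<Sum>i\<in>UNIV. \<Sum>j\<in>UNIV. \<Sum>k\<in>UNIV. A$i$k * B$k$j * C$i$j)"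
    by (simp add: inner_vec_def matrix_matrix_mult_def sum_distrib_right)
  also have "\<dots> = (\<Sum>i\<in>UNIV. \<Sum>k\<in>UNIV. \<Sum>j\<in>UNIV. A$i$k * B$k$j * C$i$j)"
    by (rule sum.cong[OF refl]) (rule sum.swap)
  also have "\<dots> = (\<Sum>k\<in>UNIV. \<Sum>i\<in>UNIV. \<Sum>j\<in>UNIV. A$i$k * B$k$j * C$i$j)"
    by (rule sum.swap)
  also have "\<dots> = (\<Sum>k\<in>UNIV. \<Sum>j\<in>UNIV. \<Sum>i\<in>UNIV. A$i$k * B$k$j * C$i$j)"
    by (rule sum.cong[OF refl]) (rule sum.swap)
  also have "\<dots> = B \<bullet> (transpose A ** C)"
    by (simp add: inner_vec_def matrix_matrix_mult_def transpose_def sum_distrib_left mult_ac)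
  finally show ?thesis .
qed

lemma inner_matrix_mult_right: "((A::real^'n^'m) ** (B::real^'p^'n)) \<bullet> C = A \<bullet> (C ** transpose B)"
proof -
  have "(A ** B) \<bullet> C = (\<Sum>i\<in>UNIV. \<Sum>j\<in>UNIV. \<Sum>k\<in>UNIV. A$i$k * B$k$j * C$i$j)"
    by (simp add: inner_vec_def matrix_matrix_mult_def sum_distrib_right)
  also have "\<dots> = (\<Sum>i\<in>UNIV. \<Sum>k\<in>UNIV. \<Sum>j\<in>UNIV. A$i$k * B$k$j * C$i$j)"
    by (rule sum.cong[OF refl]) (rule sum.swap)
  also have "\<dots> = A \<bullet> (C ** transpose B)"
    by (simp add: inner_vec_def matrix_matrix_mult_def transpose_def sum_distrib_left mult_ac)
  finally show ?thesis .
qed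

lemma inner_congruence: "((A::real^'n^'m) ** B ** transpose A) \<bullet> M = B \<bullet> (transpose A ** M ** A)"
proof -
  have "(A ** B ** transpose A) \<bullet> M = (A ** B) \<bullet> (M ** A)"
    using inner_matrix_mult_right[of "A ** B" "transpose A" M] by simp
  also have "\<dots> = B \<bullet> (transpose A ** (M ** A))"
    by (rule inner_matrix_mult_left)
  finally show ?thesis
    by (simp add: matrix_mul_assoc)
qed

section \<open>Positive semidefinite matrices\<close>

lemma psd_mult_eq_0_if_quadratic_eq_0:
  fixes M :: "real^'m^'m"
  assumes "psd M" "v \<bullet> (M *v v) = 0"
  shows "M *v v = 0"
proof -
  have sym: "transpose M = M" and nonneg: "\<And>x. 0 \<le> x \<bullet> (M *v x)"
    using assms(1) psd_def by auto
  define w where "w = M *v v"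
  define a where "a = w \<bullet> w"
  define b where "b = w \<bullet> (M *v w)"
  have b: "0 \<le> b"
    using nonneg b_def by blast
  have quadratic: "(v + t *\<^sub>R w) \<bullet> (M *v (v + t *\<^sub>R w)) = 2 * t * a + t^2 * b" for t
  proof -
    have "(v + t *\<^sub>R w) \<bullet> (M *v (v + t *\<^sub>R w))
        = v \<bullet> (M *v v) + t * (v \<bullet> (M *v w)) + t * (w \<bullet> (M *v v)) + t^2 * b"
      by (simp add: b_def matrix_vector_right_distrib matrix_vector_mult_scaleR inner_add_left
          inner_add_right power2_eq_square algebra_simps)
    also have "v \<bullet> (M *v w) = a"
      using symmetric_inner_commute[OF sym] by (simp add: a_def w_def)
    finally show ?thesis
      using assms(2) by (simp add: a_def w_def)
  qed
  have "a = 0"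
  proof (rule ccontr)
    assume "a \<noteq> 0"
    define t where "t = - a / (b + 1)"
    have "0 \<le> 2 * t * a + t^2 * b"
      using nonneg quadratic by metis
    also have "2 * t * a + t^2 * b = a^2 * (- b - 2) / (b + 1)^2"
      using b by (simp add: t_def divide_simps power2_eq_square) (simp add: algebra_simps)
    also have "\<dots> < 0"
      using \<open>a \<noteq> 0\<close> b by (intro divide_neg_pos mult_pos_neg) auto
    finally show False
      by simp
  qed
  then show ?thesis
    by (simp add: a_def w_def)
qed

definition outer :: "real^'m \<Rightarrow> real^'m \<Rightarrow> real^'m^'m" where
  "outer v w = (\<chi> i j. v $ i * w $ j)"

lemma transpose_outer: "transpose (outer v v) = outer v v"
  by (simp add: outer_def transpose_def vec_eq_iff mult.commute)

lemma inner_outer: "(M::real^'m^'m) \<bullet> outer v v = v \<bullet> (M *v v)"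
  by (simp add: outer_def inner_vec_def matrix_vector_mult_def sum_distrib_left mult_ac)

lemma matrix_mult_outer: "(M::real^'m^'m) ** outer v w = outer (M *v v) w"
  by (simp add: outer_def matrix_matrix_mult_def matrix_vector_mult_def vec_eq_iff
      sum_distrib_right sum_distrib_left mult_ac)

lemma outer_zero [simp]: "outer 0 w = 0"
  by (simp add: outer_def vec_eq_iff)

lemma outer_mult_vector: "outer b b *v v = (b \<bullet> v) *\<^sub>R (b::real^'m)"
  by (simp add: outer_def matrix_vector_mult_def inner_vec_def vec_eq_iff sum_distrib_left mult_ac)

text \<open>One step of a Cholesky factorisation, by completing the square in the \<open>j\<close>-th coordinate.\<close>

lemma psd_minus_outer_column:
  fixes M :: "real^'m^'m"
  assumes psd: "psd M" and pos: "0 < M $ j $ j"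
  defines "q \<equiv> (1 / sqrt (M $ j $ j)) *\<^sub>R (M *v axis j 1)"
  shows "psd (M - outer q q)"
proof -
  let ?c = "M *v axis j 1" and ?d = "M $ j $ j"
  have sym: "transpose M = M"
    using psd psd_def by auto
  have outer_q: "v \<bullet> (outer q q *v v) = (?c \<bullet> v)^2 / ?d" for v
  proof -
    have "v \<bullet> (outer q q *v v) = (q \<bullet> v)^2"
      by (simp add: outer_mult_vector power2_eq_square inner_commute)
    also have "\<dots> = (?c \<bullet> v)^2 / ?d"
      using pos by (simp add: q_def power_mult_distrib power_divide)
    finally show ?thesis .
  qed
  show "psd (M - outer q q)"
    unfolding psd_def
  proof
    show "transpose (M - outer q q) = M - outer q q"
      using sym transpose_outer[of q] by (simp add: transpose_diff)
    show "\<forall>v. 0 \<le> v \<bullet> ((M - outer q q) *v v)"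
    proof
      fix v :: "real^'m"
      define t where "t = (?c \<bullet> v) / ?d"
      have cv: "?c \<bullet> v = axis j 1 \<bullet> (M *v v)"
        using symmetric_inner_commute[OF sym] by (metis inner_commute)
      have djj: "axis j 1 \<bullet> (M *v axis j 1) = ?d"
        by (simp add: inner_axis' matrix_vector_mult_axis_nth)
      have "0 \<le> (v - t *\<^sub>R axis j 1) \<bullet> (M *v (v - t *\<^sub>R axis j 1))"
        using psd psd_def by blast
      also have "\<dots> = v \<bullet> (M *v v) - 2 * t * (?c \<bullet> v) + t^2 * ?d"
        using djj cv
        by (simp add: matrix_vector_mult_diff_distrib matrix_vector_mult_scaleR inner_diff_left
            inner_diff_right power2_eq_square algebra_simps inner_commute)
      also have "\<dots> = v \<bullet> ((M - outer q q) *v v)"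
        using pos
        by (simp add: t_def outer_q matrix_vector_mult_diff_rdistrib inner_diff_right field_simps
            power2_eq_square)
      finally show "0 \<le> v \<bullet> ((M - outer q q) *v v)" .
    qed
  qed
qed

lemma columns_minus_outer_column:
  fixes M :: "real^'m^'m"
  assumes sym: "transpose M = M" and pos: "0 < M $ j $ j"
  defines "q \<equiv> (1 / sqrt (M $ j $ j)) *\<^sub>R (M *v axis j 1)"
  shows "{k. (M - outer q q) *v axis k 1 \<noteq> 0} \<subseteq> {k. M *v axis k 1 \<noteq> 0} - {j}"
proof -
  have c: "(M *v axis j 1) $ k = M $ k $ j" for k
    by (rule matrix_vector_mult_axis_nth)
  have symM: "M $ a $ b = M $ b $ a" for a b
  proof -
    have "transpose M $ b $ a = M $ b $ a"
      using sym by simp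
    then show ?thesis
      by (simp add: transpose_def)
  qed
  have column: "(M - outer q q) *v axis k 1 = M *v axis k 1 - (q $ k) *\<^sub>R q" for k
    by (simp add: matrix_vector_mult_diff_rdistrib outer_def matrix_vector_mult_def
        axis_def vec_eq_iff if_distrib cong: if_cong)
  show "{k. (M - outer q q) *v axis k 1 \<noteq> 0} \<subseteq> {k. M *v axis k 1 \<noteq> 0} - {j}"
  proof
    fix k assume "k \<in> {k. (M - outer q q) *v axis k 1 \<noteq> 0}"
    then have k: "(M - outer q q) *v axis k 1 \<noteq> 0"
      by simp
    have "(q $ j) *\<^sub>R q = M *v axis j 1"
      using pos by (simp add: q_def c vec_eq_iff field_simps)
    then have "k \<noteq> j"
      using k column by auto
    moreover have "M *v axis k 1 \<noteq> 0"
    proof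
      assume "M *v axis k 1 = 0"
      then have "q $ k = 0"
        using matrix_vector_mult_axis_nth[of M k j] by (simp add: q_def c symM[of k j])
      then show False
        using k column \<open>M *v axis k 1 = 0\<close> by simp
    qed
    ultimately show "k \<in> {k. M *v axis k 1 \<noteq> 0} - {j}"
      by simp
  qed
qed

lemma psd_eq_sum_outer:
  fixes M :: "real^'m^'m"
  assumes "psd M"
  shows "\<exists>vs. M = sum_list (map (\<lambda>v. outer v v) vs)"
proof -
  have "card {k. M *v axis k 1 \<noteq> 0} = n \<Longrightarrow> psd M \<Longrightarrow> \<exists>vs. M = sum_list (map (\<lambda>v. outer v v) vs)"
    for n
  proof (induction n arbitrary: M rule: less_induct)
    case (less n)
    show ?case
    proof (cases "M = 0")
      case True
      then show ?thesis
        by (intro exI[of _ "[]"]) simp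
    next
      case False
      then obtain j where j: "M *v axis j 1 \<noteq> 0"
        using matrix_eq_0_if_columns by blast
      have djj: "axis j 1 \<bullet> (M *v axis j 1) = M $ j $ j"
        by (simp add: inner_axis' matrix_vector_mult_axis_nth)
      have "M $ j $ j \<noteq> 0"
        using psd_mult_eq_0_if_quadratic_eq_0[OF less.prems(2)] j djj by auto
      moreover have "M $ j $ j \<ge> 0"
        using less.prems(2) djj unfolding psd_def by metis
      ultimately have pos: "M $ j $ j > 0"
        by simp
      define q where "q = (1 / sqrt (M $ j $ j)) *\<^sub>R (M *v axis j 1)"
      have "card {k. (M - outer q q) *v axis k 1 \<noteq> 0} \<le> card ({k. M *v axis k 1 \<noteq> 0} - {j})"
        using less.prems(2) columns_minus_outer_column[OF _ pos, folded q_def]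
        by (intro card_mono) (auto simp: psd_def)
      also have "\<dots> < n"
        using j less.prems(1) by (intro card_Diff1_less[of _ j, THEN less_le_trans]) auto
      finally obtain vs where "M - outer q q = sum_list (map (\<lambda>v. outer v v) vs)"
        using less.IH psd_minus_outer_column[OF less.prems(2) pos, folded q_def] by blast
      then have "M = sum_list (map (\<lambda>v. outer v v) (q # vs))"
        by (simp add: algebra_simps)
      then show ?thesis ..
    qed
  qed
  then show ?thesis
    using assms by blast
qed

lemma psd_inner_eq_0_imp_mult_eq_0:
  fixes L M :: "real^'m^'m"
  assumes "psd L" "psd M" "L \<bullet> M = 0"
  shows "L ** M = 0"
proof -
  obtain vs where M: "M = sum_list (map (\<lambda>v. outer v v) vs)"
    using psd_eq_sum_outer[OF assms(2)] by blast
  have "L \<bullet> M = (\<Sum>v\<leftarrow>vs. v \<bullet> (L *v v))"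
    unfolding M by (induction vs) (simp_all add: inner_add_right inner_outer)
  moreover have "\<forall>v\<in>set vs. 0 \<le> v \<bullet> (L *v v)"
    using assms(1) psd_def by blast
  ultimately have "\<forall>v\<in>set vs. v \<bullet> (L *v v) = 0"
    using assms(3) sum_list_nonneg_eq_0_iff[of "map (\<lambda>v. v \<bullet> (L *v v)) vs"] by auto
  then have "\<forall>v\<in>set vs. L *v v = 0"
    using psd_mult_eq_0_if_quadratic_eq_0[OF assms(1)] by blast
  then show ?thesis
    unfolding M by (induction vs) (simp_all add: matrix_add_ldistrib matrix_mult_outer)
qed

lemma psd_congruence:
  assumes "psd L" "transpose L = L"
  shows "psd (A ** L ** transpose A)"
  unfolding psd_def
proof
  show "transpose (A ** L ** transpose A) = A ** L ** transpose A"
    using assms(2) by (simp add: matrix_transpose_mul matrix_mul_assoc)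
  show "\<forall>v. 0 \<le> v \<bullet> ((A ** L ** transpose A) *v v)"
  proof
    fix v
    have "0 \<le> (transpose A *v v) \<bullet> (L *v (transpose A *v v))"
      using assms(1) psd_def by blast
    also have "\<dots> = v \<bullet> ((A ** L ** transpose A) *v v)"
      by (simp add: matrix_vector_mul_assoc[symmetric] inner_matrix_vector_mult[of v A])
    finally show "0 \<le> v \<bullet> ((A ** L ** transpose A) *v v)" .
  qed
qed

section \<open>The Moore--Penrose inverse of a symmetric matrix\<close>

definition is_mp_inverse :: "real^'m^'m \<Rightarrow> real^'m^'m \<Rightarrow> bool" where
  "is_mp_inverse A X \<longleftrightarrow> A ** X ** A = A \<and> X ** A ** X = X \<and>
      transpose (A ** X) = A ** X \<and> transpose (X ** A) = X ** A"

lemma is_mp_inverse_unique: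
  assumes "is_mp_inverse A X" "is_mp_inverse A Y"
  shows "X = Y"
proof -
  have X1: "A ** X ** A = A" and X2: "X ** A ** X = X" and X3: "transpose (A ** X) = A ** X"
    and X4: "transpose (X ** A) = X ** A"
    using assms(1) is_mp_inverse_def by auto
  have Y1: "A ** Y ** A = A" and Y2: "Y ** A ** Y = Y" and Y3: "transpose (A ** Y) = A ** Y"
    and Y4: "transpose (Y ** A) = Y ** A"
    using assms(2) is_mp_inverse_def by auto
  have AT_Y: "transpose A = transpose A ** transpose Y ** transpose A"
    using arg_cong[OF Y1, of transpose] by (simp add: matrix_transpose_mul matrix_mul_assoc)
  have AT_X: "transpose A = transpose A ** transpose X ** transpose A"
    using arg_cong[OF X1, of transpose] by (simp add: matrix_transpose_mul matrix_mul_assoc)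
  have "X = X ** transpose (A ** X)"
    using X2 X3 by (simp add: matrix_mul_assoc)
  also have "\<dots> = X ** transpose X ** (transpose A ** transpose Y ** transpose A)"
    using AT_Y by (simp add: matrix_transpose_mul matrix_mul_assoc)
  also have "\<dots> = X ** transpose (A ** X) ** transpose (A ** Y)"
    by (simp add: matrix_transpose_mul matrix_mul_assoc)
  also have "\<dots> = (X ** A ** X) ** A ** Y"
    using X3 Y3 by (simp add: matrix_mul_assoc)
  finally have X_eq: "X = X ** A ** Y"
    using X2 by simp
  have "Y = transpose (Y ** A) ** Y"
    using Y2 Y4 by simp
  also have "\<dots> = (transpose A ** transpose X ** transpose A) ** transpose Y ** Y"
    using AT_X by (simp add: matrix_transpose_mul)
  also have "\<dots> = transpose (X ** A) ** transpose (Y ** A) ** Y"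
    by (simp add: matrix_transpose_mul matrix_mul_assoc)
  also have "\<dots> = X ** A ** (Y ** A ** Y)"
    using X4 Y4 by (simp add: matrix_mul_assoc)
  finally show ?thesis
    using X_eq Y2 by simp
qed

lemma kernel_projection_exists:
  fixes G0 :: "real^'m^'m"
  assumes sym: "transpose G0 = G0"
  obtains K where "transpose K = K" "K ** K = K" "G0 ** K = 0" "K ** G0 = 0"
    "\<And>v. G0 *v v = 0 \<Longrightarrow> K *v v = v"
proof -
  have "subspace {v. G0 *v v = 0}"
    by (auto simp: subspace_def matrix_vector_right_distrib matrix_vector_mult_scaleR)
  then obtain B where B_ker: "B \<subseteq> {v. G0 *v v = 0}" and orth: "pairwise orthogonal B"
    and norm: "\<And>x. x \<in> B \<Longrightarrow> norm x = 1" and ind: "independent B"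
    and span: "span B = {v. G0 *v v = 0}"
    by (rule orthonormal_basis_subspace) blast
  have fin: "finite B"
    using ind independent_imp_finite by blast
  define K where "K = (\<Sum>b\<in>B. outer b b)"
  have K_sym: "transpose K = K"
    by (simp add: K_def transpose_sum transpose_outer)
  have G0_K: "G0 ** K = 0"
    using B_ker by (auto simp: K_def matrix_mult_sum_right matrix_mult_outer intro!: sum.neutral)
  have K_G0: "K ** G0 = 0"
    using arg_cong[OF G0_K, of transpose] by (simp add: matrix_transpose_mul sym K_sym)
  have K_b: "K *v b = b" if "b \<in> B" for b
  proof -
    have "(c \<bullet> b) *\<^sub>R c = (if c = b then b else 0)" if "c \<in> B" for c
      using orth norm \<open>b \<in> B\<close> that by (auto simp: pairwise_def orthogonal_def norm_eq_1)
    then have "(\<Sum>c\<in>B. (c \<bullet> b) *\<^sub>R c) = b"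
      using fin \<open>b \<in> B\<close> by (simp add: sum.delta' cong: sum.cong)
    then show ?thesis
      by (simp add: K_def matrix_vector_mult_sum outer_mult_vector)
  qed
  have "K ** (\<Sum>b\<in>B. outer b b) = (\<Sum>b\<in>B. outer b b)"
    by (auto simp: matrix_mult_sum_right matrix_mult_outer K_b intro!: sum.cong)
  then have "K ** K = K"
    by (simp only: K_def[symmetric])
  moreover have "K *v v = v" if "G0 *v v = 0" for v
  proof -
    have "v \<in> span B"
      using span that by simp
    then show ?thesis
      using linear_eq_on_span[of "\<lambda>v. K *v v" "\<lambda>v. v" B v] K_b
      by (simp add: matrix_vector_mul_linear linear_id[unfolded id_def])
  qed
  ultimately show ?thesis
    using that K_sym G0_K K_G0 by blast
qed

text \<open>For symmetric \<open>G0\<close> and the orthogonal projection \<open>K\<close> onto its kernel, \<open>G0 + K\<close> is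
  invertible and \<open>(G0 + K)\<^sup>-\<^sup>1 - K\<close> is the Moore--Penrose inverse.\<close>

lemma is_mp_inverse_exists:
  fixes G0 :: "real^'m^'m"
  assumes sym: "transpose G0 = G0"
  shows "\<exists>X. is_mp_inverse G0 X"
proof -
  obtain K where K_sym: "transpose K = K" and KK: "K ** K = K" and G0_K: "G0 ** K = 0"
    and K_G0: "K ** G0 = 0" and K_ker: "\<And>v. G0 *v v = 0 \<Longrightarrow> K *v v = v"
    using kernel_projection_exists[OF sym] by blast
  define M where "M = G0 + K"
  have "v = 0" if "M *v v = 0" for v
  proof -
    have "K *v v = K *v (M *v v)"
      by (simp add: M_def matrix_vector_right_distrib matrix_vector_mult_add_rdistrib
          matrix_vector_mul_assoc K_G0 KK)
    then have "K *v v = 0"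
      using that by simp
    then show "v = 0"
      using that K_ker by (simp add: M_def matrix_vector_mult_add_rdistrib)
  qed
  then have "invertible M"
    using matrix_left_invertible_ker invertible_left_inverse by blast
  define Mi where "Mi = matrix_inv M"
  have M_Mi: "M ** Mi = mat 1" and Mi_M: "Mi ** M = mat 1"
    using matrix_inv_right matrix_inv_left \<open>invertible M\<close> Mi_def by auto
  have Mi_K: "Mi ** K = K"
    using Mi_M by (metis M_def G0_K KK matrix_add_rdistrib add_0 matrix_mul_assoc matrix_mul_lid)
  have K_Mi: "K ** Mi = K"
    using M_Mi by (metis M_def K_G0 KK matrix_add_ldistrib add_0 matrix_mul_assoc matrix_mul_rid)
  define X where "X = Mi - K"
  have G0_X: "G0 ** X = mat 1 - K"
    using M_Mi by (simp add: X_def M_def matrix_diff_ldistrib matrix_add_rdistrib G0_K K_Mi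
        algebra_simps)
  have X_G0: "X ** G0 = mat 1 - K"
    using Mi_M by (simp add: X_def M_def matrix_diff_rdistrib matrix_add_ldistrib K_G0 Mi_K
        algebra_simps)
  have "is_mp_inverse G0 X"
    unfolding is_mp_inverse_def
  proof (intro conjI)
    show "G0 ** X ** G0 = G0"
      by (simp add: G0_X matrix_diff_rdistrib K_G0)
    have "K ** X = 0"
      by (simp add: X_def matrix_diff_ldistrib K_Mi KK)
    then show "X ** G0 ** X = X"
      using X_G0 by (simp add: matrix_diff_rdistrib)
    show "transpose (G0 ** X) = G0 ** X" "transpose (X ** G0) = X ** G0"
      by (simp_all add: G0_X X_G0 transpose_diff K_sym)
  qed
  then show ?thesis ..
qed

lemma mp_inverse_symmetric:
  fixes G0 :: "real^'m^'m"
  assumes "transpose G0 = G0"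
  shows "G0 ** mp_inverse G0 ** G0 = G0"
proof -
  obtain X where X: "is_mp_inverse G0 X"
    using is_mp_inverse_exists[OF assms] by blast
  have "is_mp_inverse G0 (mp_inverse G0)"
    unfolding mp_inverse_def is_mp_inverse_def[symmetric]
    by (rule theI[of "is_mp_inverse G0", OF X is_mp_inverse_unique[OF _ X]])
  then show ?thesis
    by (simp add: is_mp_inverse_def)
qed

definition coord_proj :: "'m set \<Rightarrow> real^'m^'m" where
  "coord_proj S = (\<chi> a b. if a = b \<and> a \<in> S then 1 else 0)"

lemma coord_proj_mult_left: "(coord_proj S ** M) $ a $ b = (if a \<in> S then M $ a $ b else 0)"
proof -
  have "(\<Sum>k\<in>UNIV. (if a = k \<and> a \<in> S then 1 else 0) * M $ k $ b)
      = (\<Sum>k\<in>UNIV. if k = a then (if a \<in> S then M $ a $ b else 0) else 0)"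
    by (rule sum.cong) auto
  then show ?thesis
    by (simp add: coord_proj_def matrix_matrix_mult_def)
qed

lemma coord_proj_mult_right: "(M ** coord_proj S) $ a $ b = (if b \<in> S then M $ a $ b else 0)"
proof -
  have "(\<Sum>k\<in>UNIV. M $ a $ k * (if k = b \<and> k \<in> S then 1 else 0))
      = (\<Sum>k\<in>UNIV. if k = b then (if b \<in> S then M $ a $ b else 0) else 0)"
    by (rule sum.cong) auto
  then show ?thesis
    by (simp add: coord_proj_def matrix_matrix_mult_def)
qed

lemma coord_proj_mult_vector: "(coord_proj S *v v) $ a = (if a \<in> S then v $ a else 0)"
proof -
  have "(\<Sum>k\<in>UNIV. (if a = k \<and> a \<in> S then 1 else 0) * v $ k)
      = (\<Sum>k\<in>UNIV. if k = a then (if a \<in> S then v $ a else 0) else 0)"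
    by (rule sum.cong) auto
  then show ?thesis
    by (simp add: coord_proj_def matrix_vector_mult_def)
qed

lemma coord_proj_idem: "coord_proj S ** coord_proj S = coord_proj S"
  by (simp add: vec_eq_iff coord_proj_mult_left) (simp add: coord_proj_def)

lemma coord_proj_add_compl: "coord_proj S + coord_proj (- S) = mat 1"
  by (simp add: coord_proj_def mat_def vec_eq_iff)

lemma coord_proj_mult_compl: "coord_proj S ** coord_proj (- S) = 0"
  and coord_proj_compl_mult: "coord_proj (- S) ** coord_proj S = 0"
  by (simp_all add: vec_eq_iff coord_proj_mult_left) (simp_all add: coord_proj_def)

lemma transpose_coord_proj: "transpose (coord_proj S) = coord_proj S"
  by (simp add: coord_proj_def transpose_def vec_eq_iff)

lemma range_coord_proj:
  "range (\<lambda>x. coord_proj S *v x) = {x::real^'m. \<forall>i. i \<notin> S \<longrightarrow> x $ i = 0}"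
proof
  show "range (\<lambda>x. coord_proj S *v x) \<subseteq> {x. \<forall>i. i \<notin> S \<longrightarrow> x $ i = 0}"
    by (auto simp: coord_proj_mult_vector)
  show "{x. \<forall>i. i \<notin> S \<longrightarrow> x $ i = 0} \<subseteq> range (\<lambda>x. coord_proj S *v x)"
  proof
    fix x :: "real^'m" assume "x \<in> {x. \<forall>i. i \<notin> S \<longrightarrow> x $ i = 0}"
    then have "x = coord_proj S *v x"
      by (auto simp: vec_eq_iff coord_proj_mult_vector)
    then show "x \<in> range (\<lambda>x. coord_proj S *v x)"
      by blast
  qed
qed

lemma dim_coord_subspace: "dim {x::real^'m. \<forall>i. i \<notin> S \<longrightarrow> x $ i = 0} = card S"
proof -
  have "vec.dim {x::real^'m. \<forall>i. i \<notin> S \<longrightarrow> x $ i = 0} = card S"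
    by (rule dim_substandard_cart)
  then show ?thesis
    by (simp add: dim_vec_eq)
qed

lemma card_lt_rank_if_range_exceeds_coord_subspace:
  fixes D :: "real^'m^'m"
  assumes sub: "range (\<lambda>x. coord_proj I *v x) \<subseteq> range (\<lambda>x. D *v x)"
    and y: "y \<in> range (\<lambda>x. D *v x)" and out: "coord_proj (- I) *v y \<noteq> 0"
  shows "card I < rank D"
proof -
  have "subspace (range (\<lambda>x. coord_proj I *v x))"
    by (auto simp: range_coord_proj subspace_def)
  have "y \<notin> span (range (\<lambda>x. coord_proj I *v x))"
  proof
    assume "y \<in> span (range (\<lambda>x. coord_proj I *v x))"
    then obtain z where "y = coord_proj I *v z"
      using \<open>subspace (range (\<lambda>x. coord_proj I *v x))\<close> by (metis span_eq_iff rangeE)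
    then have "coord_proj (- I) *v y = 0"
      by (simp add: matrix_vector_mul_assoc coord_proj_compl_mult)
    then show False
      using out by simp
  qed
  then have "dim (insert y (range (\<lambda>x. coord_proj I *v x))) = card I + 1"
    by (simp add: dim_insert range_coord_proj dim_coord_subspace)
  moreover have "insert y (range (\<lambda>x. coord_proj I *v x)) \<subseteq> range (\<lambda>x. D *v x)"
    using sub y by blast
  ultimately have "card I + 1 \<le> dim (range (\<lambda>x. D *v x))"
    by (metis dim_subset)
  then show ?thesis
    by (simp add: rank_dim_range)
qed

lemma rank_lt_card_if_kernel_vector:
  fixes \<Phi> :: "real^'m^'m"
  assumes sym: "transpose \<Phi> = \<Phi>" and supp: "coord_proj J ** \<Phi> = \<Phi>"
    and v: "\<Phi> *v v = 0" "v \<noteq> 0" "\<forall>i. i \<notin> J \<longrightarrow> v $ i = 0"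
  shows "rank \<Phi> < card J"
proof -
  define B where "B = {x::real^'m. \<forall>i. i \<notin> J \<longrightarrow> x $ i = 0}"
  define B' where "B' = {y \<in> B. \<forall>x \<in> span {v}. orthogonal x y}"
  have "v \<in> B" "subspace B"
    using v by (auto simp: B_def subspace_def)
  then have "dim B' + dim (span {v}) = dim B"
    unfolding B'_def by (intro dim_subspace_orthogonal_to_vectors) (auto simp: span_minimal)
  then have dim_B': "dim B' + 1 = card J"
    using v by (simp add: B_def dim_span dim_coord_subspace)
  have "range (\<lambda>x. \<Phi> *v x) \<subseteq> B'"
  proof clarify
    fix z
    have "\<Phi> *v z = coord_proj J *v (\<Phi> *v z)"
      using supp by (simp add: matrix_vector_mul_assoc)
    then have "(\<Phi> *v z) $ i = 0" if "i \<notin> J" for i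
      using that by (metis coord_proj_mult_vector)
    then have "\<Phi> *v z \<in> B"
      by (simp add: B_def)
    moreover have "orthogonal x (\<Phi> *v z)" if "x \<in> span {v}" for x
    proof -
      obtain c where "x = c *\<^sub>R v"
        using \<open>x \<in> span {v}\<close> by (auto simp: span_singleton)
      moreover have "v \<bullet> (\<Phi> *v z) = 0"
        using symmetric_inner_commute[OF sym, of v z] v by simp
      ultimately show ?thesis
        by (simp add: orthogonal_def)
    qed
    ultimately show "\<Phi> *v z \<in> B'"
      by (simp add: B'_def)
  qed
  then have "rank \<Phi> \<le> dim B'"
    by (simp add: rank_dim_range dim_subset)
  then show ?thesis
    using dim_B' by simp
qed

section \<open>The pivot block of a symmetric matrix\<close>

lemma padA_left: "coord_proj I ** padA I X = coord_proj I ** X ** coord_proj I"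
  by (simp add: vec_eq_iff coord_proj_mult_left coord_proj_mult_right) (simp add: padA_def)

lemma padA_right: "padA I X ** coord_proj I = coord_proj I ** X ** coord_proj I"
  by (simp add: vec_eq_iff coord_proj_mult_left coord_proj_mult_right) (auto simp add: padA_def)

text \<open>Ordering the coordinates as \<open>I, -I\<close> and writing \<open>G0 = [A B; B\<^sup>T C]\<close>, these matrices are
  \<open>pivot_inv = [A\<^sup>-\<^sup>1 0; 0 0]\<close>, \<open>pivot_elim = [0 A\<^sup>-\<^sup>1B; 0 0]\<close> and
  \<open>schur_factor = [0 -A\<^sup>-\<^sup>1B; 0 1]\<close>, so that
  \<open>schur_factor\<^sup>T G0 schur_factor = [0 0; 0 C - B\<^sup>TA\<^sup>-\<^sup>1B]\<close>.\<close>

definition pivot_inv :: "'m set \<Rightarrow> real^'m^'m \<Rightarrow> real^'m^'m" where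
  "pivot_inv I G0 = coord_proj I ** matrix_inv (padA I G0) ** coord_proj I"

definition pivot_elim :: "'m set \<Rightarrow> real^'m^'m \<Rightarrow> real^'m^'m" where
  "pivot_elim I G0 = pivot_inv I G0 ** G0 ** coord_proj (- I)"

definition schur_factor :: "'m set \<Rightarrow> real^'m^'m \<Rightarrow> real^'m^'m" where
  "schur_factor I G0 = coord_proj (- I) - pivot_elim I G0"

lemma schur_factor_eq:
  "schur_factor I G0 = coord_proj (- I) + coord_proj I ** schur_factor I G0"
proof -
  have "coord_proj I ** pivot_elim I G0 = pivot_elim I G0"
    by (simp add: pivot_elim_def pivot_inv_def matrix_mul_assoc coord_proj_idem)
  then show ?thesis
    by (simp add: schur_factor_def matrix_diff_ldistrib coord_proj_mult_compl)
qed

locale pivot_block =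
  fixes G0 :: "real^'m^'m" and I :: "'m set"
  assumes sym: "transpose G0 = G0" and inv: "invertible (padA I G0)"
begin

abbreviation "P \<equiv> coord_proj I"
abbreviation "Q \<equiv> coord_proj (- I)"
abbreviation "Y \<equiv> matrix_inv (padA I G0)"
abbreviation "Z \<equiv> pivot_inv I G0"
abbreviation "W \<equiv> pivot_elim I G0"
abbreviation "E \<equiv> schur_factor I G0"

lemma PP: "P ** P = P" and QQ: "Q ** Q = Q" and PQ: "P ** Q = 0" and QP: "Q ** P = 0"
  and P_plus_Q: "P + Q = mat 1" and P_sym: "transpose P = P" and Q_sym: "transpose Q = Q"
  using coord_proj_idem coord_proj_mult_compl coord_proj_compl_mult coord_proj_add_compl
    transpose_coord_proj
  by (auto simp: coord_proj_compl_mult[of I, simplified])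

lemma PGZ: "P ** G0 ** Z = P"
proof -
  have "P ** (padA I G0 ** Y) ** P = P"
    using matrix_inv_right[OF inv] PP by simp
  then have "(P ** padA I G0) ** Y ** P = P"
    by (simp add: matrix_mul_assoc)
  then show ?thesis
    by (simp add: padA_left pivot_inv_def matrix_mul_assoc PP)
qed

lemma ZGP: "Z ** G0 ** P = P"
proof -
  have "P ** (Y ** padA I G0) ** P = P"
    using matrix_inv_left[OF inv] PP by simp
  then have "P ** Y ** (padA I G0 ** P) = P"
    by (simp add: matrix_mul_assoc)
  then show ?thesis
    by (simp add: padA_right pivot_inv_def matrix_mul_assoc PP)
qed

lemma PZ: "P ** Z = Z" and ZP: "Z ** P = Z" and QZ: "Q ** Z = 0"
  by (simp_all add: pivot_inv_def matrix_mul_assoc PP QP)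
    (simp add: matrix_mul_assoc[symmetric] PP)

lemma Z_sym: "transpose Z = Z"
proof -
  have PZT: "P ** transpose Z = transpose Z"
    using arg_cong[OF ZP, of transpose] by (simp add: matrix_transpose_mul P_sym)
  have PGZT: "P ** G0 ** transpose Z = P"
    using arg_cong[OF ZGP, of transpose] by (simp add: matrix_transpose_mul P_sym sym matrix_mul_assoc)
  have "transpose Z = Z ** G0 ** P ** transpose Z"
    using PZT ZGP by simp
  also have "\<dots> = Z ** G0 ** transpose Z"
    using PZT by (simp add: matrix_mul_assoc[symmetric])
  also have "\<dots> = Z ** (P ** G0 ** transpose Z)"
    using ZP by (metis matrix_mul_assoc)
  finally show ?thesis
    using PGZT ZP by simp
qed

lemma PW: "P ** W = W" and WQ: "W ** Q = W" and QW: "Q ** W = 0" and WP: "W ** P = 0"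
  and WW: "W ** W = 0"
proof -
  show PW: "P ** W = W"
    by (simp add: pivot_elim_def matrix_mul_assoc PZ)
  show "W ** Q = W"
    by (simp add: pivot_elim_def matrix_mul_assoc[symmetric] QQ)
  show "Q ** W = 0"
    by (simp add: pivot_elim_def matrix_mul_assoc QZ)
  show WP: "W ** P = 0"
    by (simp add: pivot_elim_def matrix_mul_assoc[symmetric] QP)
  have "W ** W = W ** (P ** W)"
    using PW by simp
  then have "W ** W = (W ** P) ** W"
    by (simp add: matrix_mul_assoc)
  then show "W ** W = 0"
    using WP by simp
qed

lemma W_transpose: "transpose W = Q ** G0 ** Z"
  by (simp add: pivot_elim_def matrix_transpose_mul Q_sym sym Z_sym matrix_mul_assoc)

lemma W_transpose_P: "transpose W ** P = transpose W"
  using arg_cong[OF PW, of transpose] by (simp add: matrix_transpose_mul P_sym)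

lemma E_eq: "E = Q - W"
  by (simp add: schur_factor_def)

lemma QE: "Q ** E = Q"
  by (simp add: E_eq matrix_diff_ldistrib QQ QW)

lemma PGE: "P ** G0 ** E = 0"
proof -
  have "P ** G0 ** W = P ** G0 ** Q"
    by (simp add: pivot_elim_def matrix_mul_assoc PGZ)
  then show ?thesis
    by (simp add: E_eq matrix_diff_ldistrib)
qed

lemma E_transpose: "transpose E = Q - transpose W"
  by (simp add: E_eq transpose_diff Q_sym)

lemma GZ: "G0 ** Z = P + transpose W"
proof -
  have "G0 ** Z = (P + Q) ** G0 ** Z"
    by (simp add: P_plus_Q)
  then show ?thesis
    by (simp add: matrix_add_rdistrib PGZ W_transpose)
qed

lemma schur_factor_congruence: "transpose E ** G0 ** E = Q ** G0 ** E"
proof -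
  have "transpose W ** G0 ** E = transpose W ** (P ** G0 ** E)"
    using W_transpose_P by (metis matrix_mul_assoc)
  then show ?thesis
    by (simp add: E_transpose matrix_diff_rdistrib PGE)
qed

lemma E_fixes_kernel: "G0 *v v = 0 \<Longrightarrow> E *v v = v"
proof -
  assume v: "G0 *v v = 0"
  have "Z ** G0 ** (P + Q) *v v = 0"
    using v by (simp add: P_plus_Q matrix_vector_mul_assoc[symmetric])
  then have "P *v v = - (W *v v)"
    by (simp add: matrix_add_ldistrib ZGP pivot_elim_def matrix_vector_mult_add_rdistrib
        eq_neg_iff_add_eq_0)
  moreover have "v = P *v v + Q *v v"
    using P_plus_Q by (metis matrix_vector_mul_lid matrix_vector_mult_add_rdistrib)
  ultimately show "E *v v = v"
    by (simp add: E_eq matrix_vector_mult_diff_rdistrib)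
qed

lemma schur_eq_congruence:
  "(\<chi> j k. if j \<notin> I \<and> k \<notin> I then G0 $ j $ k - (\<Sum>a\<in>I. \<Sum>b\<in>I. G0 $ a $ j * Y $ a $ b * G0 $ b $ k)
      else 0) = transpose E ** G0 ** E"
proof -
  have G0_sym: "G0 $ a $ b = G0 $ b $ a" for a b
  proof -
    have "transpose G0 $ b $ a = G0 $ b $ a"
      using sym by simp
    then show ?thesis
      by (simp add: transpose_def)
  qed
  have Z_entry: "Z $ a $ b = (if a \<in> I \<and> b \<in> I then Y $ a $ b else 0)" for a b
    by (simp add: pivot_inv_def coord_proj_mult_left coord_proj_mult_right)
  have GZG: "(G0 ** Z ** G0) $ j $ k = (\<Sum>a\<in>I. \<Sum>b\<in>I. G0 $ a $ j * Y $ a $ b * G0 $ b $ k)"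
    for j k
  proof -
    have "(G0 ** Z ** G0) $ j $ k = (\<Sum>b\<in>UNIV. \<Sum>a\<in>UNIV. G0 $ j $ a * Z $ a $ b * G0 $ b $ k)"
      by (simp add: matrix_matrix_mult_def sum_distrib_right)
    also have "\<dots> = (\<Sum>b\<in>UNIV. if b \<in> I then
        (\<Sum>a\<in>UNIV. if a \<in> I then G0 $ j $ a * Y $ a $ b * G0 $ b $ k else 0) else 0)"
      by (rule sum.cong[OF refl]) (auto simp: Z_entry intro: sum.cong)
    also have "\<dots> = (\<Sum>b\<in>I. \<Sum>a\<in>I. G0 $ j $ a * Y $ a $ b * G0 $ b $ k)"
      by (simp add: sum.If_cases)
    also have "\<dots> = (\<Sum>a\<in>I. \<Sum>b\<in>I. G0 $ a $ j * Y $ a $ b * G0 $ b $ k)"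
      by (subst sum.swap) (simp add: G0_sym[of j])
    finally show ?thesis .
  qed
  have "transpose E ** G0 ** E = Q ** G0 ** E"
    by (rule schur_factor_congruence)
  also have "\<dots> = Q ** G0 ** Q - Q ** G0 ** W"
    by (simp add: E_eq matrix_diff_ldistrib)
  also have "\<dots> = Q ** G0 ** Q - Q ** (G0 ** Z ** G0) ** Q"
    by (simp add: pivot_elim_def matrix_mul_assoc)
  finally show ?thesis
    by (simp add: vec_eq_iff coord_proj_mult_left coord_proj_mult_right GZG)
qed

text \<open>Congruence by the elimination matrix \<open>1 - W\<close> turns \<open>G0\<close> into the block diagonal matrix
  \<open>diag(A, S)\<close> without increasing the rank, so \<open>rank G0 = rank A\<close> forces \<open>S = 0\<close>.\<close>

lemma elimination_congruence:
  defines "D \<equiv> transpose (mat 1 - W) ** G0 ** (mat 1 - W)"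
  shows "D ** Z = P" and "D ** Q = Q ** G0 ** E"
proof -
  have "W ** Z = W ** Q ** Z"
    using WQ by simp
  then have WZ: "W ** Z = 0"
    by (simp add: matrix_mul_assoc[symmetric] QZ)
  have "D ** Z = transpose (mat 1 - W) ** (G0 ** Z)"
    by (simp add: D_def matrix_mul_assoc[symmetric] matrix_diff_rdistrib WZ)
  also have "\<dots> = (mat 1 - transpose W) ** (P + transpose W)"
    by (simp add: transpose_diff GZ)
  also have "\<dots> = P + transpose W - transpose W ** P - transpose W ** transpose W"
    by (simp add: matrix_diff_rdistrib matrix_add_ldistrib)
  also have "transpose W ** transpose W = 0"
    by (metis WW matrix_transpose_mul transpose_zero)
  finally show "D ** Z = P"
    by (simp add: W_transpose_P)
  have "(mat 1 - W) ** Q = E"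
    by (simp add: matrix_diff_rdistrib WQ E_eq)
  then have "D ** Q = G0 ** E - transpose W ** G0 ** E"
    by (simp add: D_def matrix_mul_assoc[symmetric] transpose_diff matrix_diff_rdistrib)
  also have "transpose W ** G0 ** E = transpose W ** (P ** G0 ** E)"
    using W_transpose_P by (metis matrix_mul_assoc)
  also have "G0 ** E = (P + Q) ** G0 ** E"
    by (simp add: P_plus_Q)
  finally show "D ** Q = Q ** G0 ** E"
    by (simp add: PGE matrix_add_rdistrib)
qed

lemma schur_eq_0_if_rank_eq:
  assumes rank: "rank G0 = card I"
  shows "Q ** G0 ** E = 0"
proof (rule ccontr)
  define D where "D = transpose (mat 1 - W) ** G0 ** (mat 1 - W)"
  note D = elimination_congruence[folded D_def]
  assume "Q ** G0 ** E \<noteq> 0"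
  then obtain k where k: "(Q ** G0 ** E) *v axis k 1 \<noteq> 0"
    using matrix_eq_0_if_columns by blast
  have "range (\<lambda>x. P *v x) \<subseteq> range (\<lambda>x. D *v x)"
  proof clarify
    fix x
    have "P *v x = D *v (Z *v x)"
      by (simp add: matrix_vector_mul_assoc D(1))
    then show "P *v x \<in> range (\<lambda>x. D *v x)"
      by blast
  qed
  moreover have "(Q ** G0 ** E) *v axis k 1 = D *v (Q *v axis k 1)"
    by (simp add: matrix_vector_mul_assoc D(2))
  then have "(Q ** G0 ** E) *v axis k 1 \<in> range (\<lambda>x. D *v x)"
    by blast
  moreover have "Q *v ((Q ** G0 ** E) *v axis k 1) \<noteq> 0"
    using k by (simp add: matrix_vector_mul_assoc matrix_mul_assoc QQ)
  ultimately have "card I < rank D"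
    by (rule card_lt_rank_if_range_exceeds_coord_subspace)
  moreover have "rank D \<le> rank G0"
    using rank_mul_le_left[of "transpose (mat 1 - W) ** G0" "mat 1 - W"]
      rank_mul_le_right[of "transpose (mat 1 - W)" G0]
    by (simp add: D_def)
  ultimately show False
    using rank by simp
qed

lemma multiplier_factorization:
  assumes LG: "L ** G0 = 0" and L_sym: "transpose L = L"
  defines "\<Phi> \<equiv> (mat 1 + W) ** L ** transpose (mat 1 + W)"
  shows "L = E ** \<Phi> ** transpose E" "Q ** \<Phi> = \<Phi>" "\<Phi> ** Q = \<Phi>" "transpose \<Phi> = \<Phi>"
proof -
  have "L ** (G0 ** Z) = 0"
    using LG by (simp add: matrix_mul_assoc)
  then have LPW: "L ** (P + transpose W) = 0"
    by (simp add: GZ)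
  have \<Phi>P: "\<Phi> ** P = 0"
  proof -
    have "(mat 1 + transpose W) ** P = P + transpose W"
      by (simp add: matrix_add_rdistrib W_transpose_P)
    then show ?thesis
      using LPW by (simp add: \<Phi>_def transpose_add matrix_mul_assoc[symmetric])
  qed
  have "\<Phi> = \<Phi> ** (P + Q)"
    by (simp add: P_plus_Q)
  then show \<Phi>Q: "\<Phi> ** Q = \<Phi>"
    by (simp add: matrix_add_ldistrib \<Phi>P)
  show \<Phi>_sym: "transpose \<Phi> = \<Phi>"
    by (simp add: \<Phi>_def matrix_transpose_mul L_sym matrix_mul_assoc)
  show Q\<Phi>: "Q ** \<Phi> = \<Phi>"
    using arg_cong[OF \<Phi>Q, of transpose] by (simp add: matrix_transpose_mul \<Phi>_sym Q_sym)
  have inv1: "(mat 1 - W) ** (mat 1 + W) = mat 1"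
    by (simp add: matrix_add_ldistrib matrix_diff_rdistrib WW)
  have "L = ((mat 1 - W) ** (mat 1 + W)) ** L ** transpose ((mat 1 - W) ** (mat 1 + W))"
    by (simp add: inv1)
  also have "\<dots> = (mat 1 - W) ** \<Phi> ** transpose (mat 1 - W)"
    by (simp add: \<Phi>_def matrix_transpose_mul matrix_mul_assoc)
  also have "\<dots> = (mat 1 - W) ** (Q ** \<Phi> ** Q) ** transpose (mat 1 - W)"
    using Q\<Phi> \<Phi>Q by (simp add: matrix_mul_assoc)
  also have "\<dots> = ((mat 1 - W) ** Q) ** \<Phi> ** transpose ((mat 1 - W) ** Q)"
    by (simp add: matrix_transpose_mul Q_sym matrix_mul_assoc)
  also have "(mat 1 - W) ** Q = E"
    by (simp add: matrix_diff_rdistrib WQ E_eq)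
  finally show "L = E ** \<Phi> ** transpose E" .
qed

lemma multiplier_core_pd_on:
  assumes L: "L = E ** \<Phi> ** transpose E" and rank_L: "rank L = CARD('m) - card I"
    and \<Phi>: "psd \<Phi>" "Q ** \<Phi> = \<Phi>"
  shows "pd_on (- I) \<Phi>"
  unfolding pd_on_def
proof (intro allI impI)
  fix v :: "real^'m"
  assume supp: "\<forall>i. i \<notin> - I \<longrightarrow> v $ i = 0" and "v \<noteq> 0"
  show "0 < v \<bullet> (\<Phi> *v v)"
  proof (rule ccontr)
    assume "\<not> 0 < v \<bullet> (\<Phi> *v v)"
    moreover have "0 \<le> v \<bullet> (\<Phi> *v v)"
      using \<Phi>(1) psd_def by blast
    ultimately have "v \<bullet> (\<Phi> *v v) = 0"
      by simp
    then have "\<Phi> *v v = 0"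
      using psd_mult_eq_0_if_quadratic_eq_0[OF \<Phi>(1)] by blast
    then have "rank \<Phi> < card (- I)"
      using \<Phi> \<open>v \<noteq> 0\<close> supp by (intro rank_lt_card_if_kernel_vector) (auto simp: psd_def)
    moreover have "rank L \<le> rank \<Phi>"
      using rank_mul_le_left[of "E ** \<Phi>" "transpose E"] rank_mul_le_right[of E \<Phi>] L by simp
    moreover have "card (- I) = CARD('m) - card I"
      by (simp add: Compl_eq_Diff_UNIV card_Diff_subset)
    ultimately show False
      using rank_L by linarith
  qed
qed

lemma kernel_derivative_relation:
  assumes GE: "G0 ** E = 0" and PE1: "P ** E1 = E1"
    and rel: "P ** (G0 ** E1 + D ** E) = 0" and K: "transpose E ** D ** E = 0"
  shows "D ** E = - (G0 ** E1)"
proof -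
  have PDE: "P ** D ** E = - (P ** G0 ** E1)"
    using rel by (simp add: matrix_add_ldistrib matrix_mul_assoc eq_neg_iff_add_eq_0 add.commute)
  have ZDE: "Z ** D ** E = - E1"
  proof -
    have "Z ** D ** E = Z ** (P ** D ** E)"
      using ZP by (metis matrix_mul_assoc)
    also have "\<dots> = - (Z ** P ** G0 ** E1)"
      by (simp add: PDE matrix_neg_ldistrib matrix_mul_assoc)
    also have "Z ** P ** G0 ** E1 = Z ** G0 ** P ** E1"
      using ZP PE1 by (simp add: matrix_mul_assoc[symmetric])
    finally show ?thesis
      by (simp add: ZGP PE1)
  qed
  have "Q ** D ** E = transpose W ** D ** E"
    using K by (simp add: E_transpose matrix_diff_rdistrib)
  also have "\<dots> = Q ** G0 ** (Z ** D ** E)"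
    by (simp add: W_transpose matrix_mul_assoc)
  finally have QDE: "Q ** D ** E = - (Q ** G0 ** E1)"
    by (simp add: ZDE matrix_neg_ldistrib)
  have "D ** E = (P + Q) ** D ** E"
    by (simp add: P_plus_Q)
  also have "\<dots> = - ((P + Q) ** G0 ** E1)"
    by (simp add: matrix_add_rdistrib PDE QDE)
  finally show ?thesis
    by (simp add: P_plus_Q)
qed

lemma kernel_derivative_forms:
  assumes DE: "D ** E = - (G0 ** E1)" and D_sym: "transpose D = D"
  shows "transpose E ** D ** E1 = - (transpose E1 ** G0 ** E1)"
    and "transpose E1 ** D ** E = - (transpose E1 ** G0 ** E1)"
    and "G0 ** X ** G0 = G0 \<Longrightarrow> transpose E ** (D ** X ** D) ** E = transpose E1 ** G0 ** E1"
proof -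
  have ETD: "transpose E ** D = - (transpose E1 ** G0)"
    using arg_cong[OF DE, of transpose] by (simp add: matrix_transpose_mul D_sym sym transpose_neg)
  show "transpose E ** D ** E1 = - (transpose E1 ** G0 ** E1)"
    by (simp add: ETD matrix_neg_rdistrib)
  show "transpose E1 ** D ** E = - (transpose E1 ** G0 ** E1)"
    by (simp add: matrix_mul_assoc[symmetric] DE matrix_neg_ldistrib)
  assume "G0 ** X ** G0 = G0"
  moreover have "transpose E ** (D ** X ** D) ** E = (transpose E ** D) ** X ** (D ** E)"
    by (simp add: matrix_mul_assoc)
  moreover have "\<dots> = transpose E1 ** (G0 ** X ** G0) ** E1"
    by (simp add: ETD DE matrix_neg_ldistrib matrix_neg_rdistrib matrix_mul_assoc)
  ultimately show "transpose E ** (D ** X ** D) ** E = transpose E1 ** G0 ** E1"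
    by simp
qed

end

section \<open>The reduced constraint near a point with invertible pivot block\<close>

locale poly_pivot =
  fixes G :: "real^'n \<Rightarrow> real^'m^'m" and I :: "'m set"
  assumes G_poly: "poly_matrix G" and G_sym: "\<And>x. transpose (G x) = G x"
begin

definition U :: "(real^'n) set" where
  "U = {x. pdet G I x \<noteq> 0}"

abbreviation "P \<equiv> coord_proj I"
abbreviation "Q \<equiv> coord_proj (- I)"
abbreviation "E y \<equiv> schur_factor I (G y)"
abbreviation "p \<equiv> pdet G I"

lemma poly_matrix_padA: "poly_matrix (\<lambda>x. padA I (G x))"
  using G_poly by (auto simp: poly_matrix_def padA_def intro!: poly_fun_if poly_fun.pf_const)

lemma pdet_poly: "p \<in> poly_fun"
  using poly_matrix_padA poly_fun_det[of "\<lambda>x. padA I (G x)"]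
  by (simp add: poly_matrix_def pdet_def[abs_def])

lemma open_U: "open U"
  using open_Collect_neq[OF poly_fun_continuous[OF pdet_poly] continuous_on_const[of UNIV 0]]
  by (simp add: U_def)

lemma pivot_block: "x \<in> U \<Longrightarrow> pivot_block (G x) I"
  using G_sym by unfold_locales (simp_all add: U_def pdet_def invertible_det_nz)

lemma G_has_derivative: "(G has_derivative dirder G x) (at x)"
  by (rule poly_matrix_has_derivative[OF G_poly])

lemma transpose_dirder_G: "transpose (dirder G x h) = dirder G x h"
proof -
  have "(G has_derivative (\<lambda>h. transpose (dirder G x h))) (at x)"
    using has_derivative_transpose[OF G_has_derivative] G_sym by simp
  then have "(\<lambda>h. transpose (dirder G x h)) = dirder G x"
    using has_derivative_unique G_has_derivative by blast
  then show ?thesis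
    by (metis)
qed

text \<open>Cramer's rule exhibits the entries of \<open>(padA I (G y))\<^sup>-\<^sup>1\<close> as quotients of polynomials by \<open>p\<close>.\<close>

lemma pivot_inverse_has_derivative:
  assumes "x \<in> U"
  obtains Y' where "((\<lambda>y. matrix_inv (padA I (G y))) has_derivative Y') (at x)"
proof -
  define N where "N k b y = det (\<chi> i j. if j = k then axis b 1 $ i else padA I (G y) $ i $ j)"
    for k b y
  have N_poly: "N k b \<in> poly_fun" for k b
    using poly_matrix_padA
    by (auto simp: N_def[abs_def] poly_matrix_def intro!: poly_fun_det poly_fun_if poly_fun.pf_const)
  define Y' where "Y' k b h = - N k b x * (inverse (p x) * (grad p x \<bullet> h) * inverse (p x))
    + (grad (N k b) x \<bullet> h) / p x" for k b h
  have D: "((\<lambda>y. N k b y / p y) has_derivative Y' k b) (at x)" for k b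
    unfolding Y'_def[abs_def] using assms
    by (intro has_derivative_divide poly_fun_has_derivative N_poly pdet_poly) (auto simp: U_def)
  have "N k b y / p y = matrix_inv (padA I (G y)) $ k $ b" if "y \<in> U" for y k b
    using that matrix_inv_cramer[of "padA I (G y)" k b] by (simp add: U_def pdet_def N_def)
  then have "((\<lambda>y. matrix_inv (padA I (G y)) $ k $ b) has_derivative Y' k b) (at x)" for k b
    by (intro has_derivative_transform_within_open[OF D open_U assms])
  then have "((\<lambda>y. matrix_inv (padA I (G y))) has_derivative (\<lambda>h. \<chi> k b. Y' k b h)) (at x)"
    by (rule has_derivative_matrixI)
  then show ?thesis
    by (rule that)
qed

lemma E_differentiable:
  assumes "x \<in> U"
  shows "(\<lambda>y. E y) differentiable (at x)"
proof -
  obtain Y' where Y': "((\<lambda>y. matrix_inv (padA I (G y))) has_derivative Y') (at x)"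
    using pivot_inverse_has_derivative[OF assms] by blast
  have "((\<lambda>y. Q - P ** (matrix_inv (padA I (G y)) ** P ** G y ** Q)) has_derivative
      (\<lambda>h. 0 - P ** (matrix_inv (padA I (G x)) ** P ** (dirder G x h ** Q)
        + Y' h ** P ** (G x ** Q)))) (at x)"
    unfolding matrix_mul_assoc[symmetric]
    by (intro has_derivative_diff has_derivative_const has_derivative_matrix_mult_left
        has_derivative_matrix_mult has_derivative_matrix_mult_right Y' G_has_derivative)
  moreover have "Q - P ** (matrix_inv (padA I (G y)) ** P ** G y ** Q) = E y" for y
    by (simp add: schur_factor_def pivot_elim_def pivot_inv_def matrix_mul_assoc)
  ultimately show ?thesis
    unfolding differentiable_def by auto
qed

lemma P_E_derivative:
  assumes E': "((\<lambda>y. E y) has_derivative E') (at x)"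
  shows "P ** E' h = E' h"
proof -
  have "((\<lambda>y. Q + P ** E y) has_derivative (\<lambda>h. 0 + P ** E' h)) (at x)"
    by (intro has_derivative_add has_derivative_const has_derivative_matrix_mult_left E')
  then have "((\<lambda>y. E y) has_derivative (\<lambda>h. P ** E' h)) (at x)"
    by (simp flip: schur_factor_eq)
  then have "(\<lambda>h. P ** E' h) = E'"
    using has_derivative_unique E' by blast
  then show ?thesis
    by (metis)
qed

lemma schur_eq_on_U: "y \<in> U \<Longrightarrow> schur G I y = transpose (E y) ** G y ** E y"
  using pivot_block.schur_eq_congruence[OF pivot_block] by (simp add: schur_def)

lemma schur_has_derivative:
  assumes "x \<in> U"
  shows "(schur G I has_derivative (\<lambda>h. transpose (E x) ** dirder G x h ** E x)) (at x)"
proof -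
  interpret B: pivot_block "G x" I
    using pivot_block[OF assms] .
  obtain E' where E': "((\<lambda>y. E y) has_derivative E') (at x)"
    using E_differentiable[OF assms] differentiable_def by blast
  note PE' = P_E_derivative[OF E']
  have "transpose (E x) ** G x ** P = transpose (P ** G x ** E x)"
    by (simp add: matrix_transpose_mul G_sym transpose_coord_proj matrix_mul_assoc)
  then have "transpose (E x) ** G x ** (P ** E' h) = 0" for h
    using B.PGE by (simp add: matrix_mul_assoc)
  then have zero1: "transpose (E x) ** (G x ** E' h) = 0" for h
    using PE' by (simp add: matrix_mul_assoc)
  have "transpose (E' h) = transpose (E' h) ** P" for h
    using arg_cong[OF PE'[of h], of transpose] by (simp add: matrix_transpose_mul transpose_coord_proj)
  then have "transpose (E' h) ** G x ** E x = transpose (E' h) ** (P ** G x ** E x)" for h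
    by (metis matrix_mul_assoc)
  then have zero2: "transpose (E' h) ** (G x ** E x) = 0" for h
    using B.PGE by (simp add: matrix_mul_assoc)
  have "((\<lambda>y. transpose (E y) ** G y ** E y) has_derivative
      (\<lambda>h. transpose (E x) ** G x ** E' h
         + (transpose (E x) ** dirder G x h + transpose (E' h) ** G x) ** E x)) (at x)"
    by (intro has_derivative_matrix_mult has_derivative_transpose E' G_has_derivative)
  then have "((\<lambda>y. transpose (E y) ** G y ** E y) has_derivative
      (\<lambda>h. transpose (E x) ** dirder G x h ** E x)) (at x)"
    by (rule has_derivative_eq_rhs)
      (simp add: fun_eq_iff matrix_add_rdistrib zero1 zero2 matrix_mul_assoc[symmetric])
  then show ?thesis
    using has_derivative_transform_within_open[OF _ open_U assms] schur_eq_on_U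
    by (metis (no_types, lifting))
qed

definition Tmat_deriv :: "real^'n \<Rightarrow> real^'n \<Rightarrow> real^'m^'m" where
  "Tmat_deriv y v = (2 * p y * (grad p y \<bullet> v)) *\<^sub>R schur G I y
     + (p y)^2 *\<^sub>R (transpose (E y) ** dirder G y v ** E y)"

lemma pdet_square_has_derivative:
  "((\<lambda>y. (p y)^2) has_derivative (\<lambda>h. 2 * p x * (grad p x \<bullet> h))) (at x)"
  using has_derivative_mult[OF poly_fun_has_derivative[OF pdet_poly] poly_fun_has_derivative[OF pdet_poly]]
  by (simp add: power2_eq_square algebra_simps)

lemma Tmat_has_derivative:
  assumes "x \<in> U"
  shows "(Tmat G I has_derivative Tmat_deriv x) (at x)"
proof -
  have "((\<lambda>y. (p y)^2 *\<^sub>R schur G I y) has_derivative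
     (\<lambda>h. (p x)^2 *\<^sub>R (transpose (E x) ** dirder G x h ** E x)
       + (2 * p x * (grad p x \<bullet> h)) *\<^sub>R schur G I x)) (at x)"
    by (intro has_derivative_scaleR pdet_square_has_derivative schur_has_derivative assms)
  then show ?thesis
    by (simp add: Tmat_def[abs_def] Tmat_deriv_def[abs_def] add.commute)
qed

definition Tmat_deriv2 :: "(real^'n \<Rightarrow> real^'m^'m) \<Rightarrow> real^'n \<Rightarrow> real^'n \<Rightarrow> real^'n \<Rightarrow> real^'m^'m"
  where "Tmat_deriv2 E' x v w =
     ((2 * p x * (grad p x \<bullet> v)) *\<^sub>R (transpose (E x) ** dirder G x w ** E x)
       + (grad (\<lambda>y. 2 * p y * (grad p y \<bullet> v)) x \<bullet> w) *\<^sub>R schur G I x)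
     + ((p x)^2 *\<^sub>R (transpose (E x) ** dirder G x v ** E' w
          + (transpose (E x) ** dirder (\<lambda>y. dirder G y v) x w + transpose (E' w) ** dirder G x v) ** E x)
       + (2 * p x * (grad p x \<bullet> w)) *\<^sub>R (transpose (E x) ** dirder G x v ** E x))"

lemma Tmat_deriv_has_derivative:
  assumes "x \<in> U" and E': "((\<lambda>y. E y) has_derivative E') (at x)"
  shows "((\<lambda>y. Tmat_deriv y v) has_derivative Tmat_deriv2 E' x v) (at x)"
proof -
  have "(\<lambda>y. 2 * p y * (grad p y \<bullet> v)) \<in> poly_fun"
    by (intro poly_fun.pf_mult poly_fun_cmult pdet_poly poly_fun_grad_inner)
  then show ?thesis
    unfolding Tmat_deriv_def Tmat_deriv2_def[abs_def]
    by (intro has_derivative_add has_derivative_scaleR poly_fun_has_derivative schur_has_derivative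
        assms pdet_square_has_derivative has_derivative_matrix_mult has_derivative_transpose E'
        poly_matrix_has_derivative[OF poly_matrix_dirder[OF G_poly]])
qed

lemma P_G_E_derivative:
  assumes "x \<in> U" and E': "((\<lambda>y. E y) has_derivative E') (at x)"
  shows "P ** (G x ** E' h + dirder G x h ** E x) = 0"
proof -
  have D: "((\<lambda>y. P ** (G y ** E y)) has_derivative
      (\<lambda>h. P ** (G x ** E' h + dirder G x h ** E x))) (at x)"
    by (intro has_derivative_matrix_mult_left has_derivative_matrix_mult G_has_derivative E')
  have "P ** (G y ** E y) = 0" if "y \<in> U" for y
    using pivot_block.PGE[OF pivot_block[OF that]] by (simp add: matrix_mul_assoc)
  then have "((\<lambda>y. 0::real^'m^'m) has_derivative
      (\<lambda>h. P ** (G x ** E' h + dirder G x h ** E x))) (at x)"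
    by (intro has_derivative_transform_within_open[OF D open_U assms(1)])
  then have "(\<lambda>h. P ** (G x ** E' h + dirder G x h ** E x)) = (\<lambda>h. 0)"
    using has_derivative_unique has_derivative_const by blast
  then show ?thesis
    by (metis)
qed

end

lemma congruence_eq_0_if_kerzero:
  fixes G0 E M :: "real^'m^'m"
  assumes "M \<in> kerzero_set G0" "G0 ** E = 0"
  shows "transpose E ** M ** E = 0"
proof -
  have "G0 *v (E *v axis j 1) = 0" for j
    using assms(2) by (simp add: matrix_vector_mul_assoc)
  then have "(transpose E ** M ** E) $ j $ k = 0" for j k
    using assms(1) by (simp add: congruence_entry kerzero_set_def)
  then show ?thesis
    by (simp add: vec_eq_iff)
qed

lemma crit_cone_if_congruence_eq_0:
  assumes fix_kernel: "\<And>v. G u *v v = 0 \<Longrightarrow> E *v v = v"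
    and "transpose E ** dirder G u h ** E = 0"
  shows "h \<in> crit_cone G u"
  unfolding crit_cone_def
proof (intro CollectI allI impI)
  fix v w assume "G u *v v = 0" "G u *v w = 0"
  then have "v \<bullet> (dirder G u h *v w) = (E *v v) \<bullet> (dirder G u h *v (E *v w))"
    using fix_kernel by simp
  also have "\<dots> = (E *v v) \<bullet> ((dirder G u h ** E) *v w)"
    by (simp only: matrix_vector_mul_assoc)
  also have "\<dots> = v \<bullet> (transpose E *v ((dirder G u h ** E) *v w))"
    using inner_matrix_vector_mult[of v "transpose E"] by (simp only: transpose_transpose)
  also have "\<dots> = v \<bullet> ((transpose E ** dirder G u h ** E) *v w)"
    by (simp only: matrix_vector_mul_assoc matrix_mul_assoc)
  finally show "v \<bullet> (dirder G u h *v w) = 0"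
    using assms(2) by simp
qed

lemma Hterm_quadratic_form:
  "h \<bullet> (Hterm G u L *v h) = 2 * (L \<bullet> (dirder G u h ** mp_inverse (G u) ** dirder G u h))"
proof -
  define X where "X = mp_inverse (G u)"
  define A where "A i = partial G i u" for i
  have "dirder G u h ** X ** dirder G u h = (\<Sum>i\<in>UNIV. \<Sum>l\<in>UNIV. (h $ i * h $ l) *\<^sub>R (A i ** X ** A l))"
    by (simp add: dirder_def A_def matrix_mult_sum_left matrix_mult_sum_right scalar_matrix_assoc
        matrix_scalar_ac sum_distrib_left scaleR_sum_right mult_ac)
      (subst sum.swap, simp add: mult.commute)
  then have "L \<bullet> (dirder G u h ** X ** dirder G u h)
      = (\<Sum>i\<in>UNIV. \<Sum>l\<in>UNIV. h $ i * h $ l * (L \<bullet> (A i ** X ** A l)))"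
    by (simp add: inner_sum_right)
  moreover have "h \<bullet> (Hterm G u L *v h)
      = (\<Sum>i\<in>UNIV. \<Sum>l\<in>UNIV. h $ i * h $ l * (2 * (L \<bullet> (A i ** X ** A l))))"
    by (simp add: Hterm_def inner_vec_def matrix_vector_mult_def frob_inner A_def X_def
        sum_distrib_left mult_ac inner_commute)
  ultimately show ?thesis
    by (simp add: X_def sum_distrib_left mult_ac)
qed

lemma hess_Lagr_quadratic_form:
  assumes "f \<in> poly_fun" "poly_matrix G"
  shows "h \<bullet> (hess (Lagr f G L) u *v h)
    = grad (\<lambda>y. grad f y \<bullet> h) u \<bullet> h - L \<bullet> dirder (\<lambda>y. dirder G y h) u h"
proof (rule hess_quadratic_form[of UNIV u _ "\<lambda>y v. grad f y \<bullet> v - L \<bullet> dirder G y v"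
      "\<lambda>v w. grad (\<lambda>y. grad f y \<bullet> v) u \<bullet> w - L \<bullet> dirder (\<lambda>y. dirder G y v) u w"])
  show "(Lagr f G L has_derivative (\<lambda>v. grad f y \<bullet> v - L \<bullet> dirder G y v)) (at y)" for y
    unfolding Lagr_def[abs_def] frob_inner
    by (intro has_derivative_diff poly_fun_has_derivative assms
        bounded_linear.has_derivative[OF bounded_linear_inner_right poly_matrix_has_derivative])
  show "((\<lambda>y. grad f y \<bullet> v - L \<bullet> dirder G y v) has_derivative
      (\<lambda>w. grad (\<lambda>y. grad f y \<bullet> v) u \<bullet> w - L \<bullet> dirder (\<lambda>y. dirder G y v) u w)) (at u)" for v
    by (intro has_derivative_diff poly_fun_has_derivative poly_fun_grad_inner assms
        bounded_linear.has_derivative[OF bounded_linear_inner_right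
          poly_matrix_has_derivative[OF poly_matrix_dirder]])
qed auto

section \<open>The multiplier of the reduced problem\<close>

locale reduced_kkt = poly_pivot G I
  for G :: "real^'n \<Rightarrow> real^'m^'m" and I :: "'m set" +
  fixes f :: "real^'n \<Rightarrow> real" and u :: "real^'n" and \<Lambda> :: "real^'m^'m"
  assumes f_poly: "f \<in> poly_fun"
    and KKT: "KKT_multiplier f G u \<Lambda>"
    and SC: "strict_compl G u \<Lambda>"
    and rank_G: "rank (G u) = card I"
    and pivot_invertible: "invertible (padA I (G u))"
begin

lemma u_in_U: "u \<in> U"
  using pivot_invertible by (simp add: U_def pdet_def invertible_det_nz)

sublocale at_u: pivot_block "G u" I
  by (rule pivot_block[OF u_in_U])

definition \<Phi> :: "real^'m^'m" where
  "\<Phi> = (mat 1 + pivot_elim I (G u)) ** \<Lambda> ** transpose (mat 1 + pivot_elim I (G u))"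

definition \<Theta> :: "real^'m^'m" where
  "\<Theta> = (1 / (p u)^2) *\<^sub>R \<Phi>"

lemma pdet_u_nonzero: "p u \<noteq> 0"
  using u_in_U by (simp add: U_def)

lemma G_E_eq_0: "G u ** E u = 0"
proof -
  have "G u ** E u = (P + Q) ** G u ** E u"
    by (simp add: at_u.P_plus_Q)
  then show ?thesis
    using at_u.schur_eq_0_if_rank_eq[OF rank_G] by (simp add: matrix_add_rdistrib at_u.PGE)
qed

lemma Tmat_u_eq_0: "Tmat G I u = 0"
  and schur_u_eq_0: "schur G I u = 0"
  using schur_eq_on_U[OF u_in_U] at_u.schur_factor_congruence at_u.schur_eq_0_if_rank_eq[OF rank_G]
  by (simp_all add: Tmat_def)

lemma \<Lambda>_sym: "transpose \<Lambda> = \<Lambda>"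
  and grad_f: "grad f u = dirder_adj G u \<Lambda>"
  and \<Lambda>_psd: "psd \<Lambda>"
  and \<Lambda>_G_eq_0: "\<Lambda> ** G u = 0"
proof -
  have "psd (G u)" "frob \<Lambda> (G u) = 0" "psd \<Lambda>"
    using KKT by (auto simp: KKT_multiplier_def)
  then show "\<Lambda> ** G u = 0" "psd \<Lambda>"
    using psd_inner_eq_0_imp_mult_eq_0 by (auto simp: frob_inner)
  show "transpose \<Lambda> = \<Lambda>" "grad f u = dirder_adj G u \<Lambda>"
    using KKT by (auto simp: KKT_multiplier_def)
qed

lemma \<Lambda>_eq: "\<Lambda> = E u ** \<Phi> ** transpose (E u)"
  and Q_\<Phi>: "Q ** \<Phi> = \<Phi>" and \<Phi>_Q: "\<Phi> ** Q = \<Phi>" and \<Phi>_sym: "transpose \<Phi> = \<Phi>"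
  using at_u.multiplier_factorization[OF \<Lambda>_G_eq_0 \<Lambda>_sym] by (simp_all add: \<Phi>_def)

lemma \<Phi>_psd: "psd \<Phi>"
  unfolding \<Phi>_def by (rule psd_congruence[OF \<Lambda>_psd \<Lambda>_sym])

lemma \<Phi>_pd_on: "pd_on (- I) \<Phi>"
proof (rule at_u.multiplier_core_pd_on[OF \<Lambda>_eq _ \<Phi>_psd Q_\<Phi>])
  show "rank \<Lambda> = CARD('m) - card I"
    using SC rank_G by (simp add: strict_compl_def)
qed

lemma inner_\<Lambda>: "\<Lambda> \<bullet> M = \<Phi> \<bullet> (transpose (E u) ** M ** E u)"
  using inner_congruence[of "E u" \<Phi> M] \<Lambda>_eq by simp

lemma inner_\<Theta>: "(p u)^2 * (\<Theta> \<bullet> M) = \<Phi> \<bullet> M"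
  using pdet_u_nonzero by (simp add: \<Theta>_def)

lemma \<Theta>_sym_on: "\<Theta> \<in> sym_on (- I)"
proof -
  have "\<Phi> $ i $ j = 0" if "i \<notin> - I \<or> j \<notin> - I" for i j
    using that coord_proj_mult_left[of "- I" \<Phi> i j] coord_proj_mult_right[of \<Phi> "- I" i j]
    by (auto simp: Q_\<Phi> \<Phi>_Q)
  then show ?thesis
    by (simp add: sym_on_def \<Theta>_def transpose_scalar \<Phi>_sym)
qed

lemma \<Theta>_psd_on: "psd_on (- I) \<Theta>"
  using \<Phi>_psd by (simp add: psd_on_def psd_def \<Theta>_def scaleR_matrix_vector_assoc[symmetric])

lemma \<Theta>_pd_on: "pd_on (- I) \<Theta>"
  using \<Phi>_pd_on pdet_u_nonzero
  by (simp add: pd_on_def \<Theta>_def scaleR_matrix_vector_assoc[symmetric])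

lemma Tmat_has_derivative_at_u:
  "(Tmat G I has_derivative (\<lambda>h. (p u)^2 *\<^sub>R (transpose (E u) ** dirder G u h ** E u))) (at u)"
  using Tmat_has_derivative[OF u_in_U] by (simp add: Tmat_deriv_def[abs_def] schur_u_eq_0)

lemma dirder_Tmat_u: "dirder (Tmat G I) u h = (p u)^2 *\<^sub>R (transpose (E u) ** dirder G u h ** E u)"
  using has_derivative_dirder_eq[OF Tmat_has_derivative_at_u] .

lemma partial_Tmat_u: "partial (Tmat G I) i u = (p u)^2 *\<^sub>R (transpose (E u) ** partial G i u ** E u)"
  using has_derivative_partial_eq[OF Tmat_has_derivative_at_u, of i]
    has_derivative_partial_eq[OF G_has_derivative, of i]
  by simp

lemma grad_reduced_Lagr_eq_0: "grad (Lagr f (Tmat G I) \<Theta>) u = 0"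
proof -
  define L' where "L' h = grad f u \<bullet> h - \<Theta> \<bullet> ((p u)^2 *\<^sub>R (transpose (E u) ** dirder G u h ** E u))"
    for h
  have "(Lagr f (Tmat G I) \<Theta> has_derivative L') (at u)"
    unfolding Lagr_def[abs_def] frob_inner L'_def[abs_def]
    by (intro has_derivative_diff poly_fun_has_derivative f_poly
        bounded_linear.has_derivative[OF bounded_linear_inner_right Tmat_has_derivative_at_u])
  then have grad_eq: "grad (Lagr f (Tmat G I) \<Theta>) u = (\<chi> i. L' (axis i 1))"
    by (rule has_derivative_grad_eq)
  have "L' (axis i 1) = 0" for i
  proof -
    have "grad f u \<bullet> axis i 1 = \<Lambda> \<bullet> partial G i u"
      using grad_f by (simp add: dirder_adj_def frob_inner inner_axis' inner_commute)
    then show ?thesis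
      using has_derivative_partial_eq[OF G_has_derivative, of i]
      by (simp add: L'_def inner_\<Theta> inner_\<Lambda>)
  qed
  then show ?thesis
    by (simp add: grad_eq vec_eq_iff)
qed

lemma reduced_regular:
  assumes ND: "nondegenerate G u"
  shows "\<forall>X \<in> sym_on (- I). dirder_adj (Tmat G I) u X = 0 \<longrightarrow> X = 0"
proof (intro ballI impI)
  fix X assume X: "X \<in> sym_on (- I)" and adj: "dirder_adj (Tmat G I) u X = 0"
  define N where "N = E u ** X ** transpose (E u)"
  have orth_partial: "partial G i u \<bullet> N = 0" for i
  proof -
    have "frob (partial (Tmat G I) i u) X = 0"
      using adj by (simp add: dirder_adj_def vec_eq_iff)
    then have "(p u)^2 * ((transpose (E u) ** partial G i u ** E u) \<bullet> X) = 0"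
      by (simp add: partial_Tmat_u frob_inner)
    then show ?thesis
      using pdet_u_nonzero inner_congruence[of "E u" X "partial G i u"] by (simp add: N_def inner_commute)
  qed
  have "transpose N = N"
    using X by (simp add: N_def sym_on_def matrix_transpose_mul matrix_mul_assoc)
  then obtain d M where M: "M \<in> kerzero_set (G u)" and N_eq: "N = dirder G u d + M"
    using ND unfolding nondegenerate_def by blast
  have "N \<bullet> dirder G u d = 0"
    using orth_partial by (simp add: dirder_def inner_sum_right inner_commute)
  moreover have "N \<bullet> M = 0"
    using inner_congruence[of "E u" X M] congruence_eq_0_if_kerzero[OF M G_E_eq_0]
    by (simp add: N_def)
  moreover have "N \<bullet> N = N \<bullet> dirder G u d + N \<bullet> M"
    by (simp only: N_eq[symmetric] inner_add_right[symmetric])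
  ultimately have "N = 0"
    by simp
  have ET_Q: "transpose (E u) ** Q = Q"
    using arg_cong[OF at_u.QE, of transpose] by (simp add: matrix_transpose_mul transpose_coord_proj)
  have "X = Q ** X ** Q"
    using X by (auto simp: sym_on_def vec_eq_iff coord_proj_mult_left coord_proj_mult_right)
  also have "\<dots> = (Q ** E u) ** X ** (transpose (E u) ** Q)"
    by (simp add: at_u.QE ET_Q)
  also have "\<dots> = Q ** N ** Q"
    by (simp add: N_def matrix_mul_assoc)
  finally show "X = 0"
    using \<open>N = 0\<close> by simp
qed

lemma crit_cone_if_dirder_Tmat_eq_0:
  assumes "dirder (Tmat G I) u h = 0"
  shows "transpose (E u) ** dirder G u h ** E u = 0" and "h \<in> crit_cone G u"
proof -
  show "transpose (E u) ** dirder G u h ** E u = 0"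
    using assms pdet_u_nonzero by (simp add: dirder_Tmat_u)
  then show "h \<in> crit_cone G u"
  proof (rule crit_cone_if_congruence_eq_0[rotated])
    show "E u *v v = v" if "G u *v v = 0" for v
      using that by (rule at_u.E_fixes_kernel)
  qed
qed

definition dE :: "real^'n \<Rightarrow> real^'m^'m" where
  "dE = frechet_derivative (\<lambda>y. E y) (at u)"

lemma E_has_derivative: "((\<lambda>y. E y) has_derivative dE) (at u)"
  using E_differentiable[OF u_in_U] by (simp add: dE_def frechet_derivative_works)

lemma dirder_G_E_if_dirder_Tmat_eq_0:
  assumes "dirder (Tmat G I) u h = 0"
  shows "dirder G u h ** E u = - (G u ** dE h)"
  using at_u.kernel_derivative_relation[OF G_E_eq_0 P_E_derivative[OF E_has_derivative]
      P_G_E_derivative[OF u_in_U E_has_derivative] crit_cone_if_dirder_Tmat_eq_0(1)[OF assms]] .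

lemma hess_reduced_Lagr_quadratic_form:
  assumes "dirder (Tmat G I) u h = 0"
  shows "h \<bullet> (hess (Lagr f (Tmat G I) \<Theta>) u *v h) = grad (\<lambda>y. grad f y \<bullet> h) u \<bullet> h
    - \<Lambda> \<bullet> dirder (\<lambda>y. dirder G y h) u h + 2 * (\<Phi> \<bullet> (transpose (dE h) ** G u ** dE h))"
proof -
  let ?D = "dirder G u h" and ?D2 = "dirder (\<lambda>y. dirder G y h) u h"
  have "h \<bullet> (hess (Lagr f (Tmat G I) \<Theta>) u *v h)
      = grad (\<lambda>y. grad f y \<bullet> h) u \<bullet> h - \<Theta> \<bullet> Tmat_deriv2 dE u h h"
  proof (rule hess_quadratic_form[OF open_U u_in_U, of _ "\<lambda>y v. grad f y \<bullet> v - \<Theta> \<bullet> Tmat_deriv y v"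
        "\<lambda>v w. grad (\<lambda>y. grad f y \<bullet> v) u \<bullet> w - \<Theta> \<bullet> Tmat_deriv2 dE u v w"])
    show "(Lagr f (Tmat G I) \<Theta> has_derivative (\<lambda>v. grad f y \<bullet> v - \<Theta> \<bullet> Tmat_deriv y v)) (at y)"
      if "y \<in> U" for y
      unfolding Lagr_def[abs_def] frob_inner
      by (intro has_derivative_diff poly_fun_has_derivative f_poly
          bounded_linear.has_derivative[OF bounded_linear_inner_right Tmat_has_derivative[OF that]])
    show "((\<lambda>y. grad f y \<bullet> v - \<Theta> \<bullet> Tmat_deriv y v) has_derivative
        (\<lambda>w. grad (\<lambda>y. grad f y \<bullet> v) u \<bullet> w - \<Theta> \<bullet> Tmat_deriv2 dE u v w)) (at u)" for v
      by (intro has_derivative_diff poly_fun_has_derivative poly_fun_grad_inner f_poly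
          bounded_linear.has_derivative[OF bounded_linear_inner_right
            Tmat_deriv_has_derivative[OF u_in_U E_has_derivative]])
  qed
  moreover have "\<Theta> \<bullet> Tmat_deriv2 dE u h h
      = \<Phi> \<bullet> (transpose (E u) ** ?D ** dE h + (transpose (E u) ** ?D2 + transpose (dE h) ** ?D) ** E u)"
    using crit_cone_if_dirder_Tmat_eq_0(1)[OF assms]
    by (simp add: Tmat_deriv2_def schur_u_eq_0 inner_add_right distrib_left inner_\<Theta>)
  moreover have "\<Phi> \<bullet> (transpose (E u) ** ?D ** dE h + (transpose (E u) ** ?D2 + transpose (dE h) ** ?D) ** E u)
      = \<Lambda> \<bullet> ?D2 - 2 * (\<Phi> \<bullet> (transpose (dE h) ** G u ** dE h))"
    using at_u.kernel_derivative_forms(1,2)[OF dirder_G_E_if_dirder_Tmat_eq_0[OF assms] transpose_dirder_G]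
    by (simp only: matrix_add_rdistrib inner_add_right inner_\<Lambda> inner_minus_right)
  ultimately show ?thesis
    by simp
qed

lemma Hterm_quadratic_form_at_u:
  assumes "dirder (Tmat G I) u h = 0"
  shows "h \<bullet> (Hterm G u \<Lambda> *v h) = 2 * (\<Phi> \<bullet> (transpose (dE h) ** G u ** dE h))"
  using at_u.kernel_derivative_forms(3)[OF dirder_G_E_if_dirder_Tmat_eq_0[OF assms]
      transpose_dirder_G mp_inverse_symmetric[OF G_sym]]
  by (simp add: Hterm_quadratic_form inner_\<Lambda>)

lemma reduced_hessian_eq:
  assumes "dirder (Tmat G I) u h = 0"
  shows "h \<bullet> (hess (Lagr f (Tmat G I) \<Theta>) u *v h) = h \<bullet> ((hess (Lagr f G \<Lambda>) u + Hterm G u \<Lambda>) *v h)"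
  using hess_reduced_Lagr_quadratic_form[OF assms] Hterm_quadratic_form_at_u[OF assms]
    hess_Lagr_quadratic_form[OF f_poly G_poly]
  by (simp add: matrix_vector_mult_add_rdistrib inner_add_right)

lemma reduced_hessian_pos:
  assumes "SOSC f G u \<Lambda>" "h \<noteq> 0" "dirder (Tmat G I) u h = 0"
  shows "0 < h \<bullet> (hess (Lagr f (Tmat G I) \<Theta>) u *v h)"
  using assms crit_cone_if_dirder_Tmat_eq_0(2)[OF assms(3)] reduced_hessian_eq[OF assms(3)]
  by (simp add: SOSC_def)

end

theorem proposition4p2:
  fixes f :: "real^'n \<Rightarrow> real"
    and G :: "real^'n \<Rightarrow> real^'m^'m"
    and u :: "real^'n"
    and \<Lambda> :: "real^'m^'m"
    and I :: "'m set"
  assumes f_poly: "f \<in> poly_fun"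
    and G_poly: "sym_poly_matrix G"
    and min: "minimizer f G u"
    and ND: "nondegenerate G u"
    and KKT: "KKT_multiplier f G u \<Lambda>"
    and SC: "strict_compl G u \<Lambda>"
    and SOS: "SOSC f G u \<Lambda>"
    and I_card: "card I = rank (G u)"
    and A_rank: "invertible (padA I (G u))"
  shows "\<exists>\<Theta> \<in> sym_on (- I).
           grad (\<lambda>x. f x - frob \<Theta> (Tmat G I x)) u = 0 \<and>
           psd_on (- I) \<Theta> \<and> psd_on (- I) (Tmat G I u) \<and> frob \<Theta> (Tmat G I u) = 0 \<and>
           (\<forall>X \<in> sym_on (- I). dirder_adj (Tmat G I) u X = 0 \<longrightarrow> X = 0) \<and>
           pd_on (- I) \<Theta> \<and>
           (\<forall>h. h \<noteq> 0 \<longrightarrow> dirder (Tmat G I) u h = 0 \<longrightarrow>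
                 0 < h \<bullet> (hess (\<lambda>x. f x - frob \<Theta> (Tmat G I x)) u *v h))"
proof -
  interpret reduced_kkt G I f u \<Lambda>
    using G_poly f_poly KKT SC I_card A_rank
    by unfold_locales (auto simp: sym_poly_matrix_def poly_matrix_def)
  have "(\<lambda>x. f x - frob \<Theta> (Tmat G I x)) = Lagr f (Tmat G I) \<Theta>"
    by (simp add: Lagr_def[abs_def])
  then show ?thesis
    using \<Theta>_sym_on grad_reduced_Lagr_eq_0 \<Theta>_psd_on Tmat_u_eq_0 reduced_regular[OF ND] \<Theta>_pd_on
      reduced_hessian_pos[OF SOS]
    by (intro bexI[of _ \<Theta>]) (auto simp: psd_on_def frob_inner)
qed

end
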